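(* Let $\hat T>0$ and $\varepsilon_0\in(0,1)$, and define $\phi_{\varepsilon_0}(s)=1-e^{-(n-1)a^*s}(1-\varepsilon_0)$ for $s\in[0,\hat T]$ (a strictly increasing function with values in $[\varepsilon_0,1)$ and $\phi_{\varepsilon_0}(0)=\varepsilon_0$). For any trajectory of system (5), any $t_0\ge0$, any constant $\hat c_0>0$, any $i\in\mathcal V_F$ and any $t_1\ge t_0$ with $|x_i(t_1)|_{\mathcal L(y(t_1))}\le\varepsilon_0|x(t_0)|_{\mathcal L(y(t_0))}+\hat c_0$, we have $$|x_i(t)|_{\mathcal L(y(t))}\le\phi_{\varepsilon_0}(t-t_1)\,|x(t_0)|_{\mathcal L(y(t_0))}+\hat c_0+2\sqrt2\int_{t_0}^{t_1+\hat T}|z(s)|\,ds\quad\text{for all }t\in[t_1,t_1+\hat T].$$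
   Context: Standing setup. Fix integers $n\ge 2$, $k\ge 1$, $d\ge 1$. The follower set is $\mathcal V_F=\{1,\dots,n\}$ and the leader set is $\mathcal V_L=\{\hat 1,\dots,\hat k\}$ (disjoint from $\mathcal V_F$); $\mathcal V=\mathcal V_F\cup\mathcal V_L$. The interaction topology is a time-varying digraph $\mathcal G_{\sigma(t)}=(\mathcal V,\mathcal E_{\sigma(t)})$, where $\sigma:[0,\infty)\to\mathcal P$ is a piecewise constant switching signal taking values in a finite set $\mathcal P$ of digraphs on $\mathcal V$; no arc of any of these digraphs enters a leader. An arc $(j,i)$ means that $i$ receives information from $j$. Dwell-time assumption: any two consecutive switching instants of $\sigma$ are separated by at least $\tau_D>0$. For $i\in\mathcal V_F$, $N_i(\sigma(t))=\{j\in\mathcal V_F:(j,i)\in\mathcal E_{\sigma(t)}\}$ and $L_i(\sigma(t))=\{j\in\mathcal V_L:(j,i)\in\mathcal E_{\sigma(t)}\}$. System (5): $\dot y_i=u_i(y,t)$ for $i=1,\dots,k$, and $\dot x_i=\sum_{j\in N_i(\sigma(t))}a_{ij}(x,y,t)(x_j-x_i)+\sum_{j\in L_i(\sigma(t))}b_{ij}(x,y,t)(y_j-x_i)+w_i(t)$ for $i=1,\dots,n$, where $x_i,y_j\in\mathbb R^d$, $x=(x_1,\dots,x_n)$, $y=(y_1,\dots,y_k)$; each $u_i(y,t)$ is continuous in $y$ and piecewise continuous in $t$; each $w_i$ is continuous; the weights $a_{ij},b_{ij}$ are continuous and satisfy $a_*\le a_{ij}(x,y,t)\le a^*$, $b_{ij}(x,y,t)\ge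 b_*$ for all $x,y,t$, with constants $0<a_*\le a^*$, $b_*>0$. Along a trajectory, $z(t)=(u_1(y(t),t),\dots,u_k(y(t),t),w_1(t),\dots,w_n(t))\in\mathbb R^{(n+k)d}$. Set notation: $|\cdot|$ is the Euclidean norm; for a closed convex $K\subset\mathbb R^d$, $|v|_K=\inf_{p\in K}|v-p|$; $\mathcal L(y(t))=\mathrm{co}\{y_1(t),\dots,y_k(t)\}$ (convex hull); $|x(t)|_{\mathcal L(y(t))}=\max_{i\in\mathcal V_F}|x_i(t)|_{\mathcal L(y(t))}$. *)

theory Defs
  imports "HOL-Analysis.Analysis"
begin

text \<open>Vertices: followers are the finite type 'f (n = CARD('f)), leaders the finite
  type 'l (k = CARD('l)); a vertex is Inl i (follower) or Inr j (leader).
  A digraph is a set of arcs; an arc (p,q) means q receives information from p.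
  States live in an abstract Euclidean space 'a (R^d, d = DIM('a)).\<close>

type_synonym ('f, 'l) digraph = "(('f + 'l) \<times> ('f + 'l)) set"

definition piecewise_continuous :: "(real \<Rightarrow> 'b::topological_space) \<Rightarrow> bool" where
  "piecewise_continuous f \<longleftrightarrow>
     (\<forall>T\<ge>0. \<exists>D. finite D \<and> D \<subseteq> {0..T} \<and> continuous_on ({0..T} - D) f \<and>
        (\<forall>t\<in>D. (0 < t \<longrightarrow> (\<exists>l. (f \<longlongrightarrow> l) (at_left t))) \<and>
                 (\<exists>l. (f \<longlongrightarrow> l) (at_right t))))"

definition switching_signal ::
  "('f, 'l) digraph set \<Rightarrow> real \<Rightarrow> (real \<Rightarrow> ('f, 'l) digraph) \<Rightarrow> bool" where
  "switching_signal P tauD \<sigma> \<longleftrightarrow>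
     finite P \<and> tauD > 0 \<and>
     (\<forall>G\<in>P. \<forall>(p, q)\<in>G. \<forall>j. q \<noteq> Inr j) \<and>
     (\<forall>t\<ge>0. \<sigma> t \<in> P) \<and>
     (\<exists>s::nat \<Rightarrow> real. s 0 = 0 \<and> (\<forall>m. s (Suc m) - s m \<ge> tauD) \<and>
        (\<forall>m. \<forall>t\<in>{s m..<s (Suc m)}. \<sigma> t = \<sigma> (s m)))"

definition follower_rhs ::
  "(real \<Rightarrow> ('f::finite, 'l::finite) digraph) \<Rightarrow>
   ('f \<Rightarrow> 'f \<Rightarrow> ('f \<Rightarrow> 'a) \<Rightarrow> ('l \<Rightarrow> 'a) \<Rightarrow> real \<Rightarrow> real) \<Rightarrow>
   ('f \<Rightarrow> 'l \<Rightarrow> ('f \<Rightarrow> 'a) \<Rightarrow> ('l \<Rightarrow> 'a) \<Rightarrow> real \<Rightarrow> real) \<Rightarrow>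
   ('f \<Rightarrow> real \<Rightarrow> 'a::real_vector) \<Rightarrow> ('f \<Rightarrow> 'a) \<Rightarrow> ('l \<Rightarrow> 'a) \<Rightarrow> real \<Rightarrow> 'f \<Rightarrow> 'a" where
  "follower_rhs \<sigma> a b w X Y t i =
     (\<Sum>j\<in>{j. (Inl j, Inl i) \<in> \<sigma> t}. a i j X Y t *\<^sub>R (X j - X i)) +
     (\<Sum>j\<in>{j. (Inr j, Inl i) \<in> \<sigma> t}. b i j X Y t *\<^sub>R (Y j - X i)) + w i t"

definition system5_data ::
  "('f::finite, 'l::finite) digraph set \<Rightarrow> real \<Rightarrow> (real \<Rightarrow> ('f, 'l) digraph) \<Rightarrow>
   ('f \<Rightarrow> 'f \<Rightarrow> ('f \<Rightarrow> 'a) \<Rightarrow> ('l \<Rightarrow> 'a) \<Rightarrow> real \<Rightarrow> real) \<Rightarrow>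
   ('f \<Rightarrow> 'l \<Rightarrow> ('f \<Rightarrow> 'a) \<Rightarrow> ('l \<Rightarrow> 'a) \<Rightarrow> real \<Rightarrow> real) \<Rightarrow>
   ('l \<Rightarrow> ('l \<Rightarrow> 'a) \<Rightarrow> real \<Rightarrow> 'a) \<Rightarrow> ('f \<Rightarrow> real \<Rightarrow> 'a::euclidean_space) \<Rightarrow>
   real \<Rightarrow> real \<Rightarrow> real \<Rightarrow> bool" where
  "system5_data P tauD \<sigma> a b u w a_lo a_up b_lo \<longleftrightarrow>
     switching_signal P tauD \<sigma> \<and>
     0 < a_lo \<and> a_lo \<le> a_up \<and> 0 < b_lo \<and>
     (\<forall>i j. continuous_on UNIV (\<lambda>(X, Y, t). a i j X Y t)) \<and>
     (\<forall>i j. continuous_on UNIV (\<lambda>(X, Y, t). b i j X Y t)) \<and>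
     (\<forall>i j X Y t. a_lo \<le> a i j X Y t \<and> a i j X Y t \<le> a_up) \<and>
     (\<forall>i j X Y t. b_lo \<le> b i j X Y t) \<and>
     (\<forall>i t. continuous_on UNIV (\<lambda>Y. u i Y t)) \<and>
     (\<forall>i Y. piecewise_continuous (\<lambda>t. u i Y t)) \<and>
     (\<forall>i. continuous_on {0..} (w i))"

definition system5_traj ::
  "(real \<Rightarrow> ('f::finite, 'l::finite) digraph) \<Rightarrow>
   ('f \<Rightarrow> 'f \<Rightarrow> ('f \<Rightarrow> 'a) \<Rightarrow> ('l \<Rightarrow> 'a) \<Rightarrow> real \<Rightarrow> real) \<Rightarrow>
   ('f \<Rightarrow> 'l \<Rightarrow> ('f \<Rightarrow> 'a) \<Rightarrow> ('l \<Rightarrow> 'a) \<Rightarrow> real \<Rightarrow> real) \<Rightarrow>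
   ('l \<Rightarrow> ('l \<Rightarrow> 'a) \<Rightarrow> real \<Rightarrow> 'a) \<Rightarrow> ('f \<Rightarrow> real \<Rightarrow> 'a::euclidean_space) \<Rightarrow>
   ('f \<Rightarrow> real \<Rightarrow> 'a) \<Rightarrow> ('l \<Rightarrow> real \<Rightarrow> 'a) \<Rightarrow> bool" where
  "system5_traj \<sigma> a b u w x y \<longleftrightarrow>
     (\<forall>i. continuous_on {0..} (x i)) \<and> (\<forall>j. continuous_on {0..} (y j)) \<and>
     (\<exists>S. countable S \<and>
        (\<forall>t\<in>{0..} - S.
           (\<forall>j. (y j has_vector_derivative u j (\<lambda>l. y l t) t) (at t within {0..})) \<and>
           (\<forall>i. (x i has_vector_derivative
                   follower_rhs \<sigma> a b w (\<lambda>l. x l t) (\<lambda>l. y l t) t i) (at t within {0..}))))"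

definition leader_hull :: "('l::finite \<Rightarrow> real \<Rightarrow> 'a::euclidean_space) \<Rightarrow> real \<Rightarrow> 'a set" where
  "leader_hull y t = convex hull (range (\<lambda>j. y j t))"

definition dist_hull_max ::
  "('f::finite \<Rightarrow> real \<Rightarrow> 'a::euclidean_space) \<Rightarrow> ('l::finite \<Rightarrow> real \<Rightarrow> 'a) \<Rightarrow> real \<Rightarrow> real" where
  "dist_hull_max x y t = Max (range (\<lambda>i. infdist (x i t) (leader_hull y t)))"

definition z_norm ::
  "('l::finite \<Rightarrow> ('l \<Rightarrow> 'a) \<Rightarrow> real \<Rightarrow> 'a::euclidean_space) \<Rightarrow> ('f::finite \<Rightarrow> real \<Rightarrow> 'a) \<Rightarrow>
   ('l \<Rightarrow> real \<Rightarrow> 'a) \<Rightarrow> real \<Rightarrow> real" where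
  "z_norm u w y t = sqrt ((\<Sum>j\<in>UNIV. (norm (u j (\<lambda>l. y l t) t))\<^sup>2) + (\<Sum>i\<in>UNIV. (norm (w i t))\<^sup>2))"

definition phi_eps :: "nat \<Rightarrow> real \<Rightarrow> real \<Rightarrow> real \<Rightarrow> real" where
  "phi_eps n a_up eps0 s = 1 - exp (- (real n - 1) * a_up * s) * (1 - eps0)"

end

theory Submission
  imports Defs
begin

(*
  Let d_l(t) be the distance of follower l to the leader hull, D(t) = max_l d_l(t) and
  Z(t) = sqrt 2 * (integral of |z| over [t0, t]).  Outside the countable set where the
  equations of (5) may fail, one explicit Euler step of the consensus part of the dynamics
  moves a follower towards a convex combination of the other agents, which gives the
  one-sided differential inequality  d_l' <= rate * (D - d_l) + Z',  rate = (n - 1) a^*.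
  Two comparison lemmas for functions with one-sided derivative bounds outside a countable
  set then yield  D(t) <= D(t0) + Z(t)  and the exponential relaxation of d_i towards
  D(t0) + Z(T), which is the claimed estimate.
*)

section \<open>Integration of derivatives with countably many exceptional points\<close>

lemma sum_power_half_le_two:
  fixes N :: "nat set"
  assumes "finite N"
  shows "(\<Sum>n\<in>N. (1/2::real) ^ n) \<le> 2"
proof -
  obtain m where m: "N \<subseteq> {..<m}"
    using assms finite_nat_iff_bounded by auto
  have "(\<Sum>n\<in>N. (1/2::real) ^ n) \<le> (\<Sum>n<m. (1/2::real) ^ n)"
    by (rule sum_mono2) (use m in auto)
  also have "(\<Sum>n<m. (1/2::real) ^ n) = 2 - 2 * (1/2) ^ m"
    by (induction m) (auto simp: field_simps)
  also have "\<dots> \<le> 2" by simp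
  finally show ?thesis .
qed

text \<open>Positive weights on a countable set C with total mass at most eps, obtained from an
  enumeration of C; they absorb the errors at the exceptional points in the gauge argument.\<close>
definition countable_weight :: "'a set \<Rightarrow> real \<Rightarrow> 'a \<Rightarrow> real" where
  "countable_weight C \<epsilon> x = \<epsilon> / 2 * (1/2) ^ to_nat_on C x"

lemma countable_weight_pos: "\<epsilon> > 0 \<Longrightarrow> countable_weight C \<epsilon> x > 0"
  by (simp add: countable_weight_def)

lemma sum_countable_weight_le:
  assumes "countable C" "finite X" "X \<subseteq> C" "\<epsilon> \<ge> 0"
  shows "sum (countable_weight C \<epsilon>) X \<le> \<epsilon>"
proof -
  have inj: "inj_on (to_nat_on C) X"
    using inj_on_to_nat_on[OF assms(1)] assms(3) inj_on_subset by blast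
  have "sum (countable_weight C \<epsilon>) X = \<epsilon> / 2 * (\<Sum>n\<in>to_nat_on C ` X. (1/2::real) ^ n)"
    by (simp add: countable_weight_def sum_distrib_left sum.reindex[OF inj])
  also have "\<dots> \<le> \<epsilon> / 2 * 2"
    using sum_power_half_le_two assms by (intro mult_left_mono) auto
  finally show ?thesis by simp
qed

lemma tagged_division_real_tag:
  fixes p :: "(real \<times> real set) set"
  assumes "p tagged_division_of {a..b}" "(x, K) \<in> p"
  obtains u v where "K = {u..v}" "u \<le> x" "x \<le> v" "{u..v} \<subseteq> {a..b}"
proof -
  have "x \<in> K" "K \<subseteq> {a..b}" using assms by blast+
  moreover obtain u v where "K = {u..v}"
    using assms by (metis box_real(2) tagged_division_ofD(4))
  ultimately show ?thesis using that by auto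
qed

lemma tagged_division_tag_inj:
  fixes p :: "(real \<times> real set) set"
  assumes p: "p tagged_division_of {a..b}"
  shows "inj_on fst {xK\<in>p. fst xK < Sup (snd xK)}" (is "inj_on fst ?R")
    and "inj_on fst {xK\<in>p. Inf (snd xK) < fst xK}" (is "inj_on fst ?L")
proof -
  have disj: "interior K1 \<inter> interior K2 = {}"
    if "(x, K1) \<in> p" "(x, K2) \<in> p" "K1 \<noteq> K2" for x K1 K2
    using tagged_division_ofD(5)[OF p that(1,2)] that(3) by auto
  have same: "K1 = K2"
    if "(x, K1) \<in> p" "(x, K2) \<in> p" "\<exists>z. z \<in> interior K1 \<inter> interior K2" for x K1 K2
    using disj that by blast
  show "inj_on fst ?R"
  proof (rule inj_onI)
    fix xK1 xK2 assume "xK1 \<in> ?R" "xK2 \<in> ?R" "fst xK1 = fst xK2"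
    then obtain x K1 K2 where *: "xK1 = (x, K1)" "xK2 = (x, K2)" "(x, K1) \<in> p" "(x, K2) \<in> p"
      "x < Sup K1" "x < Sup K2" by (cases xK1, cases xK2) auto
    obtain u1 v1 where 1: "K1 = {u1..v1}" "u1 \<le> x" "x \<le> v1"
      using tagged_division_real_tag[OF p *(3)] by blast
    obtain u2 v2 where 2: "K2 = {u2..v2}" "u2 \<le> x" "x \<le> v2"
      using tagged_division_real_tag[OF p *(4)] by blast
    have "(x + min v1 v2) / 2 \<in> interior K1 \<inter> interior K2"
      using 1 2 * by auto
    then show "xK1 = xK2" using same[OF *(3,4)] *(1,2) by blast
  qed
  show "inj_on fst ?L"
  proof (rule inj_onI)
    fix xK1 xK2 assume "xK1 \<in> ?L" "xK2 \<in> ?L" "fst xK1 = fst xK2"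
    then obtain x K1 K2 where *: "xK1 = (x, K1)" "xK2 = (x, K2)" "(x, K1) \<in> p" "(x, K2) \<in> p"
      "Inf K1 < x" "Inf K2 < x" by (cases xK1, cases xK2) auto
    obtain u1 v1 where 1: "K1 = {u1..v1}" "u1 \<le> x" "x \<le> v1"
      using tagged_division_real_tag[OF p *(3)] by blast
    obtain u2 v2 where 2: "K2 = {u2..v2}" "u2 \<le> x" "x \<le> v2"
      using tagged_division_real_tag[OF p *(4)] by blast
    have "(x + max u1 u2) / 2 \<in> interior K1 \<inter> interior K2"
      using 1 2 * by auto
    then show "xK1 = xK2" using same[OF *(3,4)] *(1,2) by blast
  qed
qed

lemma sum_tag_weights_le:
  fixes p :: "(real \<times> real set) set"
  assumes p: "p tagged_division_of {a..b}" and C: "countable C" and \<epsilon>: "\<epsilon> \<ge> 0"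
    and Q: "Q = {xK\<in>p. fst xK < Sup (snd xK)} \<or> Q = {xK\<in>p. Inf (snd xK) < fst xK}"
  shows "(\<Sum>xK\<in>Q. if fst xK \<in> C then countable_weight C \<epsilon> (fst xK) else 0) \<le> \<epsilon>"
proof -
  let ?QC = "{xK\<in>Q. fst xK \<in> C}"
  have fin: "finite Q" using p Q by (auto intro: finite_subset)
  have inj: "inj_on fst ?QC"
    using Q tagged_division_tag_inj[OF p] by (auto intro: inj_on_subset)
  have "(\<Sum>xK\<in>Q. if fst xK \<in> C then countable_weight C \<epsilon> (fst xK) else 0)
        = sum (countable_weight C \<epsilon>) (fst ` ?QC)"
    using fin by (simp add: sum.inter_filter[symmetric] sum.reindex[OF inj])
  also have "\<dots> \<le> \<epsilon>"
    using fin by (intro sum_countable_weight_le[OF C _ _ \<epsilon>]) auto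
  finally show ?thesis .
qed

lemma continuity_gauge_point:
  fixes f :: "real \<Rightarrow> 'a::real_normed_vector"
  assumes cont: "continuous (at x within S) f" and E: "E > 0" and c: "c \<ge> 0"
  obtains d where "d > 0" "\<And>y. y \<in> S \<Longrightarrow> \<bar>y - x\<bar> < d \<Longrightarrow> norm (f y - f x) + c * \<bar>y - x\<bar> \<le> E"
proof -
  obtain d1 where d1: "d1 > 0" "\<And>y. y \<in> S \<Longrightarrow> dist y x < d1 \<Longrightarrow> dist (f y) (f x) < E / 2"
    using cont E unfolding continuous_within_eps_delta by (metis half_gt_zero)
  define d where "d = min d1 (E / 2 / (c + 1))"
  have "d > 0" using d1 E c by (simp add: d_def)
  moreover have "norm (f y - f x) + c * \<bar>y - x\<bar> \<le> E" if "y \<in> S" "\<bar>y - x\<bar> < d" for y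
  proof -
    have "norm (f y - f x) < E / 2" using d1 that by (auto simp: d_def dist_norm)
    moreover have "\<bar>y - x\<bar> \<le> E / 2 / (c + 1)"
      using that by (simp add: d_def)
    then have "(c + 1) * \<bar>y - x\<bar> \<le> E / 2"
      using c by (subst (asm) pos_le_divide_eq) (auto simp: mult.commute)
    then have "c * \<bar>y - x\<bar> + \<bar>y - x\<bar> \<le> E / 2" by (simp add: distrib_right)
    then have "c * \<bar>y - x\<bar> \<le> E / 2" using abs_ge_zero[of "y - x"] by linarith
    ultimately show ?thesis by linarith
  qed
  ultimately show ?thesis using that by blast
qed

lemma countable_ftc_gauge:
  fixes f :: "real \<Rightarrow> 'a::banach"
  assumes cf: "continuous_on {a..b} f"
    and der: "\<And>x. x \<in> {a..b} - C \<Longrightarrow> (f has_vector_derivative f' x) (at x within {a..b})"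
    and \<epsilon>: "\<epsilon> > 0" and E: "\<And>x. E x > 0"
  obtains d where "\<And>x. d x > 0"
    "\<And>x y. x \<in> {a..b} - C \<Longrightarrow> y \<in> {a..b} \<Longrightarrow> \<bar>y - x\<bar> < d x \<Longrightarrow>
       norm (f y - f x - (y - x) *\<^sub>R f' x) \<le> \<epsilon> * \<bar>y - x\<bar>"
    "\<And>x y. x \<in> {a..b} \<inter> C \<Longrightarrow> y \<in> {a..b} \<Longrightarrow> \<bar>y - x\<bar> < d x \<Longrightarrow>
       norm (f y - f x) + norm (f' x) * \<bar>y - x\<bar> \<le> E x"
proof -
  have "\<exists>\<delta>>0. (x \<in> {a..b} - C \<longrightarrow> (\<forall>y\<in>{a..b}. \<bar>y - x\<bar> < \<delta> \<longrightarrow>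
              norm (f y - f x - (y - x) *\<^sub>R f' x) \<le> \<epsilon> * \<bar>y - x\<bar>)) \<and>
            (x \<in> {a..b} \<inter> C \<longrightarrow> (\<forall>y\<in>{a..b}. \<bar>y - x\<bar> < \<delta> \<longrightarrow>
              norm (f y - f x) + norm (f' x) * \<bar>y - x\<bar> \<le> E x))" for x
  proof (cases "x \<in> {a..b}")
    case False
    then show ?thesis by (intro exI[of _ 1]) auto
  next
    case xab: True
    show ?thesis
    proof (cases "x \<in> C")
      case False
      then have "(f has_vector_derivative f' x) (at x within {a..b})" using der xab by auto
      then obtain \<delta> where "\<delta> > 0" "\<forall>y\<in>{a..b}. norm (y - x) < \<delta> \<longrightarrow>
          norm (f y - f x - (y - x) *\<^sub>R f' x) \<le> \<epsilon> * norm (y - x)"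
        using \<epsilon> unfolding has_vector_derivative_def has_derivative_within_alt by blast
      then show ?thesis using False by (intro exI[of _ \<delta>]) auto
    next
      case True
      have "continuous (at x within {a..b}) f"
        using cf xab by (simp add: continuous_on_eq_continuous_within)
      then obtain \<delta> where "\<delta> > 0" "\<And>y. y \<in> {a..b} \<Longrightarrow> \<bar>y - x\<bar> < \<delta> \<Longrightarrow>
          norm (f y - f x) + norm (f' x) * \<bar>y - x\<bar> \<le> E x"
        using continuity_gauge_point E by (metis norm_ge_zero)
      then show ?thesis using True by (intro exI[of _ \<delta>]) auto
    qed
  qed
  then show ?thesis using that by metis
qed

lemma countable_ftc_tag_estimate:
  fixes f :: "real \<Rightarrow> 'a::real_normed_vector"
  assumes x: "u \<le> x" "x \<le> v" and uv: "{u..v} \<subseteq> S" and close: "\<bar>u - x\<bar> < \<delta>" "\<bar>v - x\<bar> < \<delta>"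
    and \<epsilon>: "\<epsilon> \<ge> 0" and E: "E \<ge> 0"
    and regular: "x \<notin> C \<Longrightarrow> \<forall>y\<in>S. \<bar>y - x\<bar> < \<delta> \<longrightarrow>
                    norm (f y - f x - (y - x) *\<^sub>R f' x) \<le> \<epsilon> * \<bar>y - x\<bar>"
    and exceptional: "x \<in> C \<Longrightarrow> \<forall>y\<in>S. \<bar>y - x\<bar> < \<delta> \<longrightarrow>
                    norm (f y - f x) + norm (f' x) * \<bar>y - x\<bar> \<le> E"
  shows "norm ((v - u) *\<^sub>R f' x - (f v - f u))
         \<le> \<epsilon> * (v - u) + (if x \<in> C \<and> x < v then E else 0) + (if x \<in> C \<and> u < x then E else 0)"
proof -
  have uvS: "u \<in> S" "v \<in> S" using uv x by auto
  have split: "(v - u) *\<^sub>R f' x - (f v - f u) =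
      ((v - x) *\<^sub>R f' x - (f v - f x)) + ((x - u) *\<^sub>R f' x - (f x - f u))"
    by (simp add: algebra_simps)
  show ?thesis
  proof (cases "x \<in> C")
    case False
    have "norm ((v - u) *\<^sub>R f' x - (f v - f u)) \<le>
          norm (f v - f x - (v - x) *\<^sub>R f' x) + norm (f u - f x - (u - x) *\<^sub>R f' x)"
      unfolding split by (rule order_trans[OF norm_triangle_ineq]) (simp add: norm_minus_commute algebra_simps)
    also have "\<dots> \<le> \<epsilon> * \<bar>v - x\<bar> + \<epsilon> * \<bar>u - x\<bar>"
      using regular[OF False] uvS close by (intro add_mono) auto
    also have "\<dots> = \<epsilon> * (v - u)" using x by (simp add: algebra_simps)
    finally show ?thesis using False by simp
  next
    case True
    have half: "norm ((y - x) *\<^sub>R f' x - (f y - f x)) \<le> (if y \<noteq> x then E else 0)"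
      if "y \<in> S" "\<bar>y - x\<bar> < \<delta>" for y
    proof (cases "y = x")
      case False
      have "norm ((y - x) *\<^sub>R f' x - (f y - f x)) \<le> norm (f y - f x) + norm (f' x) * \<bar>y - x\<bar>"
        by (metis add.commute norm_minus_commute norm_scaleR norm_triangle_ineq4 mult.commute)
      also have "\<dots> \<le> E" using exceptional[OF True] that by blast
      finally show ?thesis using False by simp
    qed simp
    have "norm ((v - u) *\<^sub>R f' x - (f v - f u)) \<le>
          norm ((v - x) *\<^sub>R f' x - (f v - f x)) + norm ((u - x) *\<^sub>R f' x - (f u - f x))"
      unfolding split by (rule order_trans[OF norm_triangle_ineq]) (simp add: norm_minus_commute algebra_simps)
    also have "\<dots> \<le> (if v \<noteq> x then E else 0) + (if u \<noteq> x then E else 0)"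
      using half uvS close by (intro add_mono) auto
    moreover have "\<epsilon> * (v - u) \<ge> 0" using x \<epsilon> by simp
    ultimately show ?thesis using True x by (auto split: if_splits)
  qed
qed

lemma countable_ftc_division_estimate:
  fixes f :: "real \<Rightarrow> 'a::banach"
  assumes ab: "a \<le> b" and C: "countable C" and \<epsilon>: "\<epsilon> > 0"
    and p: "p tagged_division_of {a..b}" and fine: "(\<lambda>x. ball x (d x)) fine p"
    and regular: "\<And>x y. x \<in> {a..b} - C \<Longrightarrow> y \<in> {a..b} \<Longrightarrow> \<bar>y - x\<bar> < d x \<Longrightarrow>
       norm (f y - f x - (y - x) *\<^sub>R f' x) \<le> \<epsilon> * \<bar>y - x\<bar>"
    and exceptional: "\<And>x y. x \<in> {a..b} \<inter> C \<Longrightarrow> y \<in> {a..b} \<Longrightarrow> \<bar>y - x\<bar> < d x \<Longrightarrow>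
       norm (f y - f x) + norm (f' x) * \<bar>y - x\<bar> \<le> countable_weight C \<epsilon> x"
  shows "norm ((\<Sum>(x, K)\<in>p. Henstock_Kurzweil_Integration.content K *\<^sub>R f' x) - (f b - f a))
         \<le> \<epsilon> * (b - a) + 2 * \<epsilon>"
proof -
  define E where "E = countable_weight C \<epsilon>"
  define R where "R xK = (if fst xK \<in> C then E (fst xK) else 0)" for xK :: "real \<times> real set"
  define B where "B xK = \<epsilon> * (Sup (snd xK) - Inf (snd xK))
      + (if fst xK < Sup (snd xK) then R xK else 0) + (if Inf (snd xK) < fst xK then R xK else 0)"
    for xK :: "real \<times> real set"
  have tag: "norm (Henstock_Kurzweil_Integration.content K *\<^sub>R f' x - (f (Sup K) - f (Inf K)))
             \<le> B (x, K)" if xK: "(x, K) \<in> p" for x K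
  proof -
    obtain u v where K: "K = {u..v}" "u \<le> x" "x \<le> v" "{u..v} \<subseteq> {a..b}"
      using tagged_division_real_tag[OF p xK] by blast
    have "u \<in> ball x (d x)" "v \<in> ball x (d x)" using fineD[OF fine xK] K by (auto simp del: mem_ball)
    then have close: "\<bar>u - x\<bar> < d x" "\<bar>v - x\<bar> < d x" by (auto simp: dist_real_def abs_minus_commute)
    have "x \<in> {a..b}" using K by auto
    then have "norm ((v - u) *\<^sub>R f' x - (f v - f u))
       \<le> \<epsilon> * (v - u) + (if x \<in> C \<and> x < v then E x else 0) + (if x \<in> C \<and> u < x then E x else 0)"
      using regular[of x] exceptional[of x] \<epsilon> less_imp_le[OF countable_weight_pos[OF \<epsilon>]]
      by (intro countable_ftc_tag_estimate[OF K(2,3,4) close]) (auto simp: E_def less_imp_le)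
    moreover have "B (x, K) = \<epsilon> * (v - u) + (if x \<in> C \<and> x < v then E x else 0)
                             + (if x \<in> C \<and> u < x then E x else 0)"
      using K by (simp add: B_def R_def)
    moreover have "Henstock_Kurzweil_Integration.content K = v - u" "Sup K = v" "Inf K = u"
      using K by auto
    ultimately show ?thesis by simp
  qed
  have ba: "b - a = (\<Sum>(x, K)\<in>p. Sup K - Inf K)" "f b - f a = (\<Sum>(x, K)\<in>p. f (Sup K) - f (Inf K))"
    using additive_tagged_division_1[where f = "\<lambda>x. x"] additive_tagged_division_1[where f = f]
      ab p by auto
  have "norm ((\<Sum>(x, K)\<in>p. Henstock_Kurzweil_Integration.content K *\<^sub>R f' x) - (f b - f a))
      = norm (\<Sum>(x, K)\<in>p. Henstock_Kurzweil_Integration.content K *\<^sub>R f' x - (f (Sup K) - f (Inf K)))"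
    unfolding ba(2) by (simp add: split_def sum_subtractf)
  also have "\<dots> \<le> sum B p"
    by (rule sum_norm_le) (use tag in auto)
  also have "\<dots> = \<epsilon> * (b - a) + sum R {xK\<in>p. fst xK < Sup (snd xK)}
                  + sum R {xK\<in>p. Inf (snd xK) < fst xK}"
  proof -
    have "(\<Sum>xK\<in>p. \<epsilon> * (Sup (snd xK) - Inf (snd xK))) = \<epsilon> * (b - a)"
      unfolding ba(1) by (simp add: sum_distrib_left split_def)
    moreover have "finite p" using p by blast
    ultimately show ?thesis unfolding B_def sum.distrib by (simp add: sum.inter_filter)
  qed
  also have "\<dots> \<le> \<epsilon> * (b - a) + 2 * \<epsilon>"
    using sum_tag_weights_le[OF p C less_imp_le[OF \<epsilon>] disjI1[OF refl]]
      sum_tag_weights_le[OF p C less_imp_le[OF \<epsilon>] disjI2[OF refl]]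
    unfolding R_def E_def by linarith
  finally show ?thesis .
qed

text \<open>Fundamental theorem of calculus for a continuous function that is differentiable
  outside a countable set (the library version allows only finite exceptional sets).\<close>
theorem fundamental_theorem_of_calculus_countable:
  fixes f :: "real \<Rightarrow> 'a::banach"
  assumes ab: "a \<le> b" and C: "countable C" and cf: "continuous_on {a..b} f"
    and der: "\<And>x. x \<in> {a..b} - C \<Longrightarrow> (f has_vector_derivative f' x) (at x within {a..b})"
  shows "(f' has_integral (f b - f a)) {a..b}"
  unfolding has_integral_real
proof (intro allI impI)
  fix e :: real assume e: "e > 0"
  define \<epsilon> where "\<epsilon> = e / (b - a + 3)"
  have \<epsilon>: "\<epsilon> > 0" using e ab by (simp add: \<epsilon>_def)
  obtain d where d: "\<And>x. d x > 0"
    "\<And>x y. x \<in> {a..b} - C \<Longrightarrow> y \<in> {a..b} \<Longrightarrow> \<bar>y - x\<bar> < d x \<Longrightarrow>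
       norm (f y - f x - (y - x) *\<^sub>R f' x) \<le> \<epsilon> * \<bar>y - x\<bar>"
    "\<And>x y. x \<in> {a..b} \<inter> C \<Longrightarrow> y \<in> {a..b} \<Longrightarrow> \<bar>y - x\<bar> < d x \<Longrightarrow>
       norm (f y - f x) + norm (f' x) * \<bar>y - x\<bar> \<le> countable_weight C \<epsilon> x"
    using countable_ftc_gauge[of a b f C f' \<epsilon> "countable_weight C \<epsilon>", OF cf der \<epsilon>
        countable_weight_pos[OF \<epsilon>]] by blast
  have "\<epsilon> * (b - a) + 2 * \<epsilon> < e"
  proof -
    have "\<epsilon> * (b - a + 3) = e" using ab by (simp add: \<epsilon>_def)
    then show ?thesis using \<epsilon> by (simp add: algebra_simps)
  qed
  show "\<exists>\<gamma>. gauge \<gamma> \<and> (\<forall>\<D>. \<D> tagged_division_of {a..b} \<and> \<gamma> fine \<D> \<longrightarrow>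
        norm ((\<Sum>(x, K)\<in>\<D>. Henstock_Kurzweil_Integration.content K *\<^sub>R f' x) - (f b - f a)) < e)"
  proof (intro exI conjI allI impI)
    show "gauge (\<lambda>x. ball x (d x))" using d(1) gauge_ball_dependent by blast
    fix p assume "p tagged_division_of {a..b} \<and> (\<lambda>x. ball x (d x)) fine p"
    then have "norm ((\<Sum>(x, K)\<in>p. Henstock_Kurzweil_Integration.content K *\<^sub>R f' x) - (f b - f a))
               \<le> \<epsilon> * (b - a) + 2 * \<epsilon>"
      by (intro countable_ftc_division_estimate[OF ab C \<epsilon>]) (use d(2,3) in auto)
    with \<open>\<epsilon> * (b - a) + 2 * \<epsilon> < e\<close>
    show "norm ((\<Sum>(x, K)\<in>p. Henstock_Kurzweil_Integration.content K *\<^sub>R f' x) - (f b - f a)) < e"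
      by linarith
  qed
qed

section \<open>Comparison lemmas for one-sided derivative bounds\<close>

lemma last_crossing_point:
  fixes g :: "real \<Rightarrow> real"
  assumes ab: "a \<le> b" and cg: "continuous_on {a..b} g" and ga: "g a \<le> c" and gb: "c < g b"
  shows "\<exists>t\<in>{a..<b}. g t = c \<and> (\<forall>s\<in>{t<..b}. c < g s)"
proof -
  let ?A = "{t\<in>{a..b}. g t \<le> c}"
  define T where "T = Sup ?A"
  have aA: "a \<in> ?A" using ab ga by auto
  have bdd: "bdd_above ?A" by (rule bdd_aboveI[of _ b]) auto
  have "closed ?A"
    using continuous_on_closed_Collect_le[OF cg continuous_on_const[of _ c]] by auto
  then have TA: "T \<in> ?A" unfolding T_def using closed_contains_Sup[OF _ bdd] aA by blast
  have above: "c < g s" if "s \<in> {T<..b}" for s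
  proof -
    have "s \<notin> ?A" using cSup_upper[OF _ bdd, of s] that by (auto simp: T_def)
    then show ?thesis using that TA by auto
  qed
  have "g T = c"
  proof (rule ccontr)
    assume "g T \<noteq> c"
    then have "g T < c" using TA by auto
    moreover have "continuous_on {T..b} g"
      by (rule continuous_on_subset[OF cg]) (use TA in auto)
    ultimately obtain s where "T \<le> s" "s \<le> b" "g s = c"
      using IVT'[of g T c b] gb TA by auto
    then show False using above[of s] \<open>g T < c\<close> by (cases "s = T") auto
  qed
  moreover have "T < b" using TA gb \<open>g T = c\<close> by (cases "T = b") auto
  ultimately show ?thesis using TA above by auto
qed

text \<open>Proof: otherwise the set of
  last crossing points of a tilted copy is uncountable, and at any of its points outside C
  the local estimate contradicts the crossing property.\<close>
lemma dini_nonincreasing: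
  fixes F :: "real \<Rightarrow> real"
  assumes ab: "a \<le> b" and cF: "continuous_on {a..b} F" and C: "countable C"
    and loc: "\<And>t e. t \<in> {a..<b} - C \<Longrightarrow> e > 0 \<Longrightarrow>
                 eventually (\<lambda>s. F s \<le> F t + e * (s - t)) (at_right t)"
  shows "F b \<le> F a"
proof (rule ccontr)
  assume "\<not> F b \<le> F a"
  then have lt: "F a < F b" and altb: "a < b" using ab by (auto simp: less_le)
  define \<eta> where "\<eta> = (F b - F a) / (2 * (b - a))"
  have \<eta>: "\<eta> > 0" using lt altb by (simp add: \<eta>_def)
  define g where "g t = F t - F a - \<eta> * (t - a)" for t
  have "g b = (F b - F a) / 2" using altb by (simp add: g_def \<eta>_def field_simps)
  then have gb: "g b > 0" using lt by simp
  have cg: "continuous_on {a..b} g" unfolding g_def by (intro continuous_intros cF)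
  define L where "L = {t\<in>{a..<b}. \<forall>s\<in>{t<..b}. g t < g s}"
  have "{0<..<g b} \<subseteq> g ` L"
  proof
    fix c assume "c \<in> {0<..<g b}"
    then obtain t where "t \<in> {a..<b}" "g t = c" "\<forall>s\<in>{t<..b}. c < g s"
      using last_crossing_point[OF ab cg, of c] by (auto simp: g_def)
    then show "c \<in> g ` L" unfolding L_def by force
  qed
  moreover have "uncountable {0<..<g b}" using gb by (simp add: uncountable_open_interval)
  ultimately have "\<not> L \<subseteq> C" using C by (metis countable_image countable_subset)
  then obtain t where t: "t \<in> {a..<b}" "t \<notin> C" and rise: "\<forall>s\<in>{t<..b}. g t < g s"
    unfolding L_def by blast
  have "eventually (\<lambda>s. F s \<le> F t + \<eta> / 2 * (s - t)) (at_right t)"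
    by (rule loc) (use t \<eta> in auto)
  moreover have "eventually (\<lambda>s. t < s \<and> s \<le> b) (at_right t)"
    using t by (auto simp: eventually_at_right_field intro!: exI[of _ b])
  ultimately have "eventually (\<lambda>s. False) (at_right t)"
  proof eventually_elim
    case (elim s)
    have "\<eta> * (s - a) = \<eta> * (t - a) + 2 * (\<eta> / 2 * (s - t))" by (simp add: field_simps)
    then have "g s \<le> g t - \<eta> / 2 * (s - t)" using elim unfolding g_def by linarith
    moreover have "\<eta> / 2 * (s - t) > 0" using \<eta> elim by simp
    moreover have "g t < g s" using rise elim by simp
    ultimately show False by linarith
  qed
  then show False by (simp add: eventually_False trivial_limit_at_right_real)
qed

lemma one_minus_mult_exp_bound:
  fixes x y :: real
  assumes x: "0 \<le> x" "x \<le> 1"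
  shows "(1 - x) * exp x * y \<le> y + \<bar>y\<bar> * x\<^sup>2"
proof -
  have "(1 - x) * exp x \<le> exp (- x) * exp x"
    using exp_ge_add_one_self[of "- x"] by (intro mult_right_mono) auto
  then have upper: "(1 - x) * exp x \<le> 1" by (simp add: exp_minus)
  have "1 - x\<^sup>2 = (1 - x) * (1 + x)" by (simp add: power2_eq_square algebra_simps)
  also have "\<dots> \<le> (1 - x) * exp x"
    using x exp_ge_add_one_self[of x] by (intro mult_left_mono) (auto simp: add.commute)
  finally have lower: "1 - x\<^sup>2 \<le> (1 - x) * exp x" .
  show ?thesis
  proof (cases "y \<ge> 0")
    case True
    then have "(1 - x) * exp x * y \<le> 1 * y" using upper by (intro mult_right_mono)
    moreover have "0 \<le> \<bar>y\<bar> * x\<^sup>2" by simp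
    ultimately show ?thesis by linarith
  next
    case False
    then have "(1 - x) * exp x * y \<le> (1 - x\<^sup>2) * y" using lower by (intro mult_right_mono_neg) auto
    then show ?thesis using False by (simp add: algebra_simps)
  qed
qed

lemma continuous_within_by_bound:
  fixes f g :: "real \<Rightarrow> real"
  assumes bound: "\<And>s. s \<in> A \<Longrightarrow> \<bar>f s - f t\<bar> \<le> g s"
    and cont: "continuous (at t within A) g" and zero: "g t = 0"
  shows "continuous (at t within A) f"
proof -
  have g0: "(g \<longlongrightarrow> 0) (at t within A)" using cont zero by (simp add: continuous_within)
  have "\<forall>\<^sub>F s in at t within A. norm (f s - f t) \<le> g s"
    using bound by (auto simp: eventually_at_filter)
  then have "((\<lambda>s. f s - f t) \<longlongrightarrow> 0) (at t within A)"
    by (rule Lim_null_comparison[OF _ g0])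
  then show ?thesis unfolding continuous_within by (rule LIM_zero_cancel)
qed

lemma eventually_at_right_step_small:
  fixes c t :: real
  assumes c: "c \<ge> 0"
  shows "eventually (\<lambda>s. (s - t) * c \<le> 1) (at_right t)"
proof -
  have "(s - t) * c \<le> 1" if "t < s" "s < t + 1 / (c + 1)" for s
  proof -
    have "(s - t) * (c + 1) < 1" using that c by (simp add: pos_less_divide_eq[symmetric] add_pos_nonneg)
    then show ?thesis using that by (simp add: algebra_simps)
  qed
  then show ?thesis unfolding eventually_at_right_field using c by (intro exI[of _ "t + 1 / (c + 1)"]) auto
qed

lemma vector_derivative_at_right_estimate:
  fixes f :: "real \<Rightarrow> 'a::real_normed_vector"
  assumes der: "(f has_vector_derivative f') (at t within S)" and S: "{t<..} \<subseteq> S" and e: "e > 0"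
  shows "eventually (\<lambda>s. norm (f s - f t - (s - t) *\<^sub>R f') \<le> e * (s - t)) (at_right t)"
proof -
  obtain d where d: "d > 0"
      "\<forall>s\<in>S. norm (s - t) < d \<longrightarrow> norm (f s - f t - (s - t) *\<^sub>R f') \<le> e * norm (s - t)"
    using der e unfolding has_vector_derivative_def has_derivative_within_alt by blast
  have "norm (f s - f t - (s - t) *\<^sub>R f') \<le> e * (s - t)" if "t < s" "s < t + d" for s
  proof -
    have "s \<in> S" using S that(1) by auto
    then show ?thesis using d(2) that by auto
  qed
  then show ?thesis unfolding eventually_at_right_field using d(1) by (intro exI[of _ "t + d"]) auto
qed

lemma continuous_at_right_estimate:
  fixes f :: "real \<Rightarrow> 'a::metric_space"
  assumes cont: "continuous (at t within S) f" and S: "{t..} \<subseteq> S" and e: "e > 0"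
  shows "eventually (\<lambda>s. \<forall>r\<in>{t..s}. dist (f r) (f t) \<le> e) (at_right t)"
proof -
  obtain d where d: "d > 0" "\<forall>r\<in>S. dist r t < d \<longrightarrow> dist (f r) (f t) < e"
    using cont e unfolding continuous_within_eps_delta by blast
  have "dist (f r) (f t) \<le> e" if "s < t + d" "r \<in> {t..s}" for s r
  proof -
    have "r \<in> S" "dist r t < d" using S that by (auto simp: dist_real_def)
    then show ?thesis using d(2) by (auto intro: less_imp_le)
  qed
  then show ?thesis unfolding eventually_at_right_field using d(1) by (intro exI[of _ "t + d"]) auto
qed

text \<open>One step of the comparison argument: an explicit-Euler decay estimate for F over a
  step of length h gives an almost nonincreasing weighted value F * exp (k * t).\<close>
lemma exp_weighted_step:
  fixes Fs Ft Et k h e :: real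
  assumes Et: "Et > 0" and k: "k \<ge> 0" and e: "e > 0" and h: "h > 0" "k * h \<le> 1"
    and h_small: "h * (\<bar>Ft\<bar> * Et * k\<^sup>2 + 1) \<le> e / 2"
    and step: "Fs \<le> (1 - k * h) * Ft + e / (6 * Et) * h"
  shows "Fs * (Et * exp (k * h)) \<le> Ft * Et + e * h"
proof -
  define q where "q = exp (k * h)"
  define c where "c = \<bar>Ft\<bar> * Et * k\<^sup>2"
  have "q \<le> exp 1" using h(2) by (simp add: q_def)
  then have q: "q > 0" "q \<le> 3" using exp_le by (simp add: q_def, linarith)
  have "Fs * (Et * q) \<le> ((1 - k * h) * Ft + e / (6 * Et) * h) * (Et * q)"
    using step Et q by (intro mult_right_mono) auto
  also have "\<dots> = ((1 - k * h) * q * Ft) * Et + (e / (6 * Et) * Et) * h * q"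
    by (simp add: algebra_simps)
  also have "\<dots> = ((1 - k * h) * exp (k * h) * Ft) * Et + e / 6 * h * q"
    using Et by (simp add: q_def)
  also have "\<dots> \<le> (Ft + \<bar>Ft\<bar> * (k * h)\<^sup>2) * Et + e / 6 * h * 3"
  proof (rule add_mono)
    show "(1 - k * h) * exp (k * h) * Ft * Et \<le> (Ft + \<bar>Ft\<bar> * (k * h)\<^sup>2) * Et"
      using one_minus_mult_exp_bound[of "k * h" Ft] h k Et by (intro mult_right_mono) auto
    show "e / 6 * h * q \<le> e / 6 * h * 3"
      using q h e by (intro mult_left_mono) auto
  qed
  also have "\<dots> = Ft * Et + h * (h * c) + e / 2 * h"
    by (simp add: c_def power2_eq_square algebra_simps)
  also have "\<dots> \<le> Ft * Et + h * (e / 2) + e / 2 * h"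
  proof -
    have "h * (c + 1) = h * c + h" by (simp add: algebra_simps)
    then have "h * c \<le> e / 2" using h(1) h_small by (simp add: c_def)
    then have "h * (h * c) \<le> h * (e / 2)" using h(1) by (intro mult_left_mono) auto
    then show ?thesis by linarith
  qed
  also have "\<dots> = Ft * Et + e * h"
    by (simp only: add.assoc mult.commute[of h "e / 2"] distrib_right[symmetric] field_sum_of_halves)
  finally show ?thesis by (simp only: q_def)
qed

lemma dini_exp_decay:
  fixes F :: "real \<Rightarrow> real"
  assumes ab: "a \<le> b" and cF: "continuous_on {a..b} F" and C: "countable C" and k: "k \<ge> 0"
    and loc: "\<And>t e. t \<in> {a..<b} - C \<Longrightarrow> e > 0 \<Longrightarrow>
                 eventually (\<lambda>s. F s \<le> (1 - k * (s - t)) * F t + e * (s - t)) (at_right t)"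
  shows "F b * exp (k * (b - a)) \<le> F a"
proof -
  define W where "W t = F t * exp (k * (t - a))" for t
  have "W b \<le> W a"
  proof (rule dini_nonincreasing[OF ab _ C])
    show "continuous_on {a..b} W" unfolding W_def by (intro continuous_intros cF)
    fix t e :: real assume t: "t \<in> {a..<b} - C" and e: "e > 0"
    define Et where "Et = exp (k * (t - a))"
    have Et: "Et > 0" by (simp add: Et_def)
    define c where "c = \<bar>F t\<bar> * Et * k\<^sup>2 + 1"
    have c: "c \<ge> 0" using Et by (simp add: c_def)
    have "eventually (\<lambda>s. F s \<le> (1 - k * (s - t)) * F t + e / (6 * Et) * (s - t)) (at_right t)"
      using loc[OF t, of "e / (6 * Et)"] e Et by simp
    moreover have "eventually (\<lambda>s. (s - t) * k \<le> 1) (at_right t)"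
      by (rule eventually_at_right_step_small[OF k])
    moreover have "eventually (\<lambda>s. (s - t) * (2 * c / e) \<le> 1) (at_right t)"
      by (rule eventually_at_right_step_small) (use c e in simp)
    moreover have "eventually (\<lambda>s. t < s) (at_right t)" by (rule eventually_at_right_less)
    ultimately show "eventually (\<lambda>s. W s \<le> W t + e * (s - t)) (at_right t)"
    proof eventually_elim
      case (elim s)
      have "(s - t) * c \<le> e / 2" using elim(3) e by (simp add: field_simps)
      then have "F s * (Et * exp (k * (s - t))) \<le> F t * Et + e * (s - t)"
        using elim(1,2,4) by (intro exp_weighted_step[OF Et k e]) (auto simp: c_def mult.commute)
      moreover have "k * (s - a) = k * (t - a) + k * (s - t)" by (simp add: algebra_simps)
      ultimately show ?case by (simp add: W_def Et_def exp_add)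
    qed
  qed
  then show ?thesis by (simp add: W_def)
qed

section \<open>Distances to convex hulls\<close>

lemma infdist_convex_hull_attained:
  fixes Y :: "'l::finite \<Rightarrow> 'a::euclidean_space"
  obtains q where "q \<in> convex hull (range Y)" "infdist p (convex hull (range Y)) = dist p q"
proof -
  have "compact (convex hull (range Y))" "convex hull (range Y) \<noteq> {}"
    by (auto intro!: finite_imp_compact_convex_hull)
  then show ?thesis using infdist_attains_inf[OF compact_imp_closed] that by metis
qed

lemma infdist_convex_hull_perturb:
  fixes Y1 Y2 :: "'l::finite \<Rightarrow> 'a::euclidean_space"
  assumes close: "\<And>j. norm (Y1 j - Y2 j) \<le> \<Delta>"
  shows "infdist p (convex hull (range Y2)) \<le> infdist p (convex hull (range Y1)) + \<Delta>"
proof -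
  obtain q where q: "q \<in> convex hull (range Y1)" "infdist p (convex hull (range Y1)) = dist p q"
    using infdist_convex_hull_attained by blast
  have "finite (range Y1)" by simp
  then obtain c where c: "\<forall>z\<in>range Y1. 0 \<le> c z" "sum c (range Y1) = 1" "(\<Sum>z\<in>range Y1. c z *\<^sub>R z) = q"
    using q(1) convex_hull_finite by blast
  define q' where "q' = (\<Sum>z\<in>range Y1. c z *\<^sub>R Y2 (inv Y1 z))"
  have q'_hull: "q' \<in> convex hull (range Y2)" unfolding q'_def
    by (rule convex_sum) (use c in \<open>auto intro: hull_inc\<close>)
  have "q - q' = (\<Sum>z\<in>range Y1. c z *\<^sub>R (Y1 (inv Y1 z) - Y2 (inv Y1 z)))"
    unfolding c(3)[symmetric] q'_def
    by (simp add: sum_subtractf[symmetric] scaleR_diff_right f_inv_into_f)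
  then have "norm (q - q') \<le> (\<Sum>z\<in>range Y1. c z * norm (Y1 (inv Y1 z) - Y2 (inv Y1 z)))"
    using c(1) by (auto intro!: order_trans[OF norm_sum] sum_mono)
  also have "\<dots> \<le> (\<Sum>z\<in>range Y1. c z * \<Delta>)"
    using c(1) close by (intro sum_mono mult_left_mono) auto
  also have "\<dots> = \<Delta>" using c(2) by (simp add: sum_distrib_right[symmetric])
  finally have "dist q q' \<le> \<Delta>" by (simp add: dist_norm)
  moreover have "infdist p (convex hull (range Y2)) \<le> dist p q'"
    using q'_hull by (rule infdist_le)
  ultimately show ?thesis using q(2) dist_triangle[of p q' q] by linarith
qed

lemma convex_step_in:
  fixes z :: "'i \<Rightarrow> 'a::real_vector"
  assumes H: "convex H" "z0 \<in> H" "finite I" "\<And>k. k \<in> I \<Longrightarrow> z k \<in> H"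
    and c: "\<And>k. k \<in> I \<Longrightarrow> c k \<ge> 0" "sum c I \<le> 1"
  shows "z0 + (\<Sum>k\<in>I. c k *\<^sub>R (z k - z0)) \<in> H"
proof -
  define wt where "wt ob = (case ob of None \<Rightarrow> 1 - sum c I | Some k \<Rightarrow> c k)" for ob
  define pt where "pt ob = (case ob of None \<Rightarrow> z0 | Some k \<Rightarrow> z k)" for ob
  have sum_opt: "sum g (insert None (Some ` I)) = g None + (\<Sum>k\<in>I. g (Some k))"
    for g :: "'i option \<Rightarrow> 'b::comm_monoid_add"
    using H(3) by (subst sum.insert) (auto simp: sum.reindex)
  have "(\<Sum>ob\<in>insert None (Some ` I). wt ob *\<^sub>R pt ob) \<in> H"
    by (rule convex_sum) (use H c in \<open>auto simp: sum_opt wt_def pt_def\<close>)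
  also have "(\<Sum>ob\<in>insert None (Some ` I). wt ob *\<^sub>R pt ob) = z0 + (\<Sum>k\<in>I. c k *\<^sub>R (z k - z0))"
    unfolding sum_opt by (simp add: wt_def pt_def scaleR_diff_right sum_subtractf scaleR_diff_left
        scaleR_sum_left[symmetric])
  finally show ?thesis .
qed

lemma convex_step_in2:
  fixes z1 :: "'i \<Rightarrow> 'a::real_vector" and z2 :: "'k \<Rightarrow> 'a"
  assumes H: "convex H" "z0 \<in> H" "finite I1" "finite I2"
    "\<And>k. k \<in> I1 \<Longrightarrow> z1 k \<in> H" "\<And>k. k \<in> I2 \<Longrightarrow> z2 k \<in> H"
    and c: "\<And>k. k \<in> I1 \<Longrightarrow> c1 k \<ge> 0" "\<And>k. k \<in> I2 \<Longrightarrow> c2 k \<ge> 0" "sum c1 I1 + sum c2 I2 \<le> 1"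
  shows "z0 + (\<Sum>k\<in>I1. c1 k *\<^sub>R (z1 k - z0)) + (\<Sum>k\<in>I2. c2 k *\<^sub>R (z2 k - z0)) \<in> H"
proof -
  have sum_plus: "sum g (Inl ` I1 \<union> Inr ` I2) = (\<Sum>k\<in>I1. g (Inl k)) + (\<Sum>k\<in>I2. g (Inr k))"
    for g :: "'i + 'k \<Rightarrow> 'b::comm_monoid_add"
    using H(3,4) by (subst sum.union_disjoint) (auto simp: sum.reindex)
  have "z0 + (\<Sum>k\<in>Inl ` I1 \<union> Inr ` I2. case_sum c1 c2 k *\<^sub>R (case_sum z1 z2 k - z0)) \<in> H"
    by (rule convex_step_in) (use H c in \<open>auto simp: sum_plus\<close>)
  then show ?thesis unfolding sum_plus by (simp add: add.assoc)
qed

text \<open>One explicit Euler step of the consensus dynamics of follower l: moving towards the other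
  followers and towards the leaders with total step weight at most 1 increases the distance to the
  leader hull by at most the followers' excess over l's own distance.\<close>
lemma infdist_hull_consensus_step:
  fixes X :: "'f::finite \<Rightarrow> 'a::euclidean_space" and Y :: "'l::finite \<Rightarrow> 'a"
  assumes \<alpha>: "\<And>j. \<alpha> j \<ge> 0" and \<beta>: "\<And>j. \<beta> j \<ge> 0" and h: "h \<ge> 0"
    and small: "h * (sum \<alpha> (N - {l}) + sum \<beta> L) \<le> 1"
    and bound: "\<And>j. infdist (X j) (convex hull (range Y)) \<le> D"
  shows "infdist (X l + h *\<^sub>R ((\<Sum>j\<in>N. \<alpha> j *\<^sub>R (X j - X l)) + (\<Sum>j\<in>L. \<beta> j *\<^sub>R (Y j - X l))))
                 (convex hull (range Y))
         \<le> infdist (X l) (convex hull (range Y))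
           + h * sum \<alpha> (N - {l}) * (D - infdist (X l) (convex hull (range Y)))"
proof -
  define H where "H = convex hull (range Y)"
  have "\<forall>j. \<exists>qj. qj \<in> H \<and> infdist (X j) H = dist (X j) qj"
    unfolding H_def using infdist_convex_hull_attained by metis
  then obtain q where q: "\<And>j. q j \<in> H" "\<And>j. infdist (X j) H = dist (X j) (q j)" by metis
  define N' where "N' = N - {l}"
  define A where "A = sum \<alpha> N'"
  define B where "B = sum \<beta> L"
  define e where "e j = X j - q j" for j
  have norm_e: "norm (e j) = infdist (X j) H" for j using q(2) by (simp add: e_def dist_norm)
  have drop_l: "(\<Sum>j\<in>N. \<alpha> j *\<^sub>R (X j - X l)) = (\<Sum>j\<in>N'. \<alpha> j *\<^sub>R (X j - X l))"
    unfolding N'_def by (cases "l \<in> N") (simp_all add: sum.remove)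
  define Q where "Q = q l + (\<Sum>j\<in>N'. (h * \<alpha> j) *\<^sub>R (q j - q l)) + (\<Sum>j\<in>L. (h * \<beta> j) *\<^sub>R (Y j - q l))"
  have QH: "Q \<in> H" unfolding Q_def
  proof (rule convex_step_in2)
    show "convex H" unfolding H_def by simp
    show "sum (\<lambda>j. h * \<alpha> j) N' + sum (\<lambda>j. h * \<beta> j) L \<le> 1"
      using small by (simp add: N'_def sum_distrib_left[symmetric] distrib_left)
  qed (use q \<alpha> \<beta> h in \<open>auto simp: H_def intro: hull_inc\<close>)
  define P where "P = X l + h *\<^sub>R ((\<Sum>j\<in>N. \<alpha> j *\<^sub>R (X j - X l)) + (\<Sum>j\<in>L. \<beta> j *\<^sub>R (Y j - X l)))"
  have "P - Q = (X l - q l) + (\<Sum>j\<in>N'. (h * \<alpha> j) *\<^sub>R (e j - e l)) + (\<Sum>j\<in>L. (h * \<beta> j) *\<^sub>R (q l - X l))"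
    unfolding P_def Q_def drop_l e_def
    by (simp add: scaleR_add_right scaleR_sum_right scaleR_diff_right sum_subtractf sum.distrib algebra_simps)
  also have "\<dots> = (1 - h * A - h * B) *\<^sub>R e l + (\<Sum>j\<in>N'. (h * \<alpha> j) *\<^sub>R e j)"
    by (simp add: e_def A_def B_def scaleR_diff_right sum_subtractf scaleR_sum_left[symmetric]
        sum_distrib_left sum.distrib algebra_simps)
  finally have PQ: "P - Q = (1 - h * A - h * B) *\<^sub>R e l + (\<Sum>j\<in>N'. (h * \<alpha> j) *\<^sub>R e j)" .
  have coef: "1 - h * A - h * B \<ge> 0" using small by (simp add: A_def B_def N'_def distrib_left)
  have "infdist P H \<le> norm (P - Q)" using infdist_le[OF QH] by (simp add: dist_norm)
  also have "\<dots> \<le> (1 - h * A - h * B) * norm (e l) + (\<Sum>j\<in>N'. (h * \<alpha> j) * norm (e j))"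
    unfolding PQ using coef \<alpha> h
    by (intro order_trans[OF norm_triangle_ineq] add_mono order_trans[OF norm_sum] sum_mono)
       (auto simp: abs_of_nonneg)
  also have "\<dots> \<le> (1 - h * A - h * B) * norm (e l) + (\<Sum>j\<in>N'. (h * \<alpha> j) * D)"
    using \<alpha> h bound norm_e coef by (intro add_mono sum_mono mult_left_mono) (auto simp: H_def)
  also have "\<dots> = (1 - h * A - h * B) * norm (e l) + h * A * D"
    by (simp add: A_def sum_distrib_right sum_distrib_left)
  also have "\<dots> \<le> infdist (X l) H + h * A * (D - infdist (X l) H)"
  proof -
    have "h * B * norm (e l) \<ge> 0" using h \<beta> by (simp add: B_def sum_nonneg)
    then show ?thesis unfolding norm_e by (simp add: algebra_simps)
  qed
  finally show ?thesis unfolding P_def A_def N'_def H_def .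
qed

section \<open>Estimates along a trajectory of system (5)\<close>

locale system5_window =
  fixes P :: "('f::finite, 'l::finite) digraph set"
    and \<sigma> :: "real \<Rightarrow> ('f, 'l) digraph"
    and a :: "'f \<Rightarrow> 'f \<Rightarrow> ('f \<Rightarrow> 'a::euclidean_space) \<Rightarrow> ('l \<Rightarrow> 'a) \<Rightarrow> real \<Rightarrow> real"
    and b :: "'f \<Rightarrow> 'l \<Rightarrow> ('f \<Rightarrow> 'a) \<Rightarrow> ('l \<Rightarrow> 'a) \<Rightarrow> real \<Rightarrow> real"
    and u :: "'l \<Rightarrow> ('l \<Rightarrow> 'a) \<Rightarrow> real \<Rightarrow> 'a"
    and w x :: "'f \<Rightarrow> real \<Rightarrow> 'a"
    and y :: "'l \<Rightarrow> real \<Rightarrow> 'a"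
    and tauD a_lo a_up b_lo t0 T :: real
  assumes data: "system5_data P tauD \<sigma> a b u w a_lo a_up b_lo"
    and traj: "system5_traj \<sigma> a b u w x y"
    and t0: "0 \<le> t0"
    and t0T: "t0 \<le> T"
begin

lemma a_nonneg: "0 \<le> a i j X Y t" and a_le: "a i j X Y t \<le> a_up" and b_nonneg: "0 \<le> b i l X Y t"
  using data unfolding system5_data_def by (metis less_le order_trans)+

lemma w_cont: "continuous_on {0..} (w i)"
  using data by (simp add: system5_data_def)

lemma x_cont: "continuous_on {0..} (x i)" and y_cont: "continuous_on {0..} (y j)"
  using traj by (simp_all add: system5_traj_def)

definition lvel :: "'l \<Rightarrow> real \<Rightarrow> 'a" where
  "lvel j s = u j (\<lambda>l. y l s) s"

definition znorm :: "real \<Rightarrow> real" where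
  "znorm s = z_norm u w y s"

definition unorm :: "real \<Rightarrow> real" where
  "unorm s = sqrt (\<Sum>j\<in>UNIV. (norm (lvel j s))\<^sup>2)"

definition exc :: "real set" where
  "exc = (SOME S. countable S \<and>
        (\<forall>t\<in>{0..} - S.
           (\<forall>j. (y j has_vector_derivative u j (\<lambda>l. y l t) t) (at t within {0..})) \<and>
           (\<forall>i. (x i has_vector_derivative
                   follower_rhs \<sigma> a b w (\<lambda>l. x l t) (\<lambda>l. y l t) t i) (at t within {0..}))))"

lemma exc_countable: "countable exc"
  and leader_derivative: "\<And>t j. t \<in> {0..} - exc \<Longrightarrow> (y j has_vector_derivative lvel j t) (at t within {0..})"
  and follower_derivative: "\<And>t i. t \<in> {0..} - exc \<Longrightarrow> (x i has_vector_derivative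
                   follower_rhs \<sigma> a b w (\<lambda>l. x l t) (\<lambda>l. y l t) t i) (at t within {0..})"
proof -
  have "\<exists>S. countable S \<and>
        (\<forall>t\<in>{0..} - S.
           (\<forall>j. (y j has_vector_derivative u j (\<lambda>l. y l t) t) (at t within {0..})) \<and>
           (\<forall>i. (x i has_vector_derivative
                   follower_rhs \<sigma> a b w (\<lambda>l. x l t) (\<lambda>l. y l t) t i) (at t within {0..})))"
    using traj by (simp add: system5_traj_def)
  note exc_prop = someI_ex[OF this, folded exc_def]
  show "countable exc" using exc_prop by blast
  show "\<And>t j. t \<in> {0..} - exc \<Longrightarrow> (y j has_vector_derivative lvel j t) (at t within {0..})"
    using exc_prop by (simp add: lvel_def)
  show "\<And>t i. t \<in> {0..} - exc \<Longrightarrow> (x i has_vector_derivative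
                   follower_rhs \<sigma> a b w (\<lambda>l. x l t) (\<lambda>l. y l t) t i) (at t within {0..})"
    using exc_prop by blast
qed

lemma lvel_has_integral:
  assumes "0 \<le> p" "p \<le> q"
  shows "(lvel j has_integral (y j q - y j p)) {p..q}"
proof (rule fundamental_theorem_of_calculus_countable[OF assms(2) exc_countable])
  show "continuous_on {p..q} (y j)" by (rule continuous_on_subset[OF y_cont]) (use assms in auto)
  fix t assume "t \<in> {p..q} - exc"
  then have "t \<in> {0..} - exc" using assms by auto
  from leader_derivative[OF this] show "(y j has_vector_derivative lvel j t) (at t within {p..q})"
    by (rule has_vector_derivative_within_subset) (use assms in auto)
qed

lemma lvel_measurable: "lvel j \<in> borel_measurable (lebesgue_on {t0..T})"
  using lvel_has_integral[OF t0 t0T] by (auto intro: integrable_imp_measurable)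

lemma w_measurable: "w i \<in> borel_measurable (lebesgue_on {t0..T})"
  by (rule continuous_imp_measurable_on_sets_lebesgue)
     (rule continuous_on_subset[OF w_cont], use t0 in auto)

lemma znorm_measurable: "znorm \<in> borel_measurable (lebesgue_on {t0..T})"
proof -
  have "(\<lambda>s. sqrt ((\<Sum>j\<in>UNIV. (norm (lvel j s))\<^sup>2) + (\<Sum>i\<in>UNIV. (norm (w i s))\<^sup>2)))
          \<in> borel_measurable (lebesgue_on {t0..T})"
    using lvel_measurable w_measurable by measurable
  moreover have "znorm = (\<lambda>s. sqrt ((\<Sum>j\<in>UNIV. (norm (lvel j s))\<^sup>2) + (\<Sum>i\<in>UNIV. (norm (w i s))\<^sup>2)))"
    by (simp add: fun_eq_iff znorm_def z_norm_def lvel_def)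
  ultimately show ?thesis by simp
qed

lemma unorm_measurable: "unorm \<in> borel_measurable (lebesgue_on {t0..T})"
  unfolding unorm_def using lvel_measurable by measurable

lemma znorm_nonneg: "znorm s \<ge> 0"
  by (simp add: znorm_def z_norm_def sum_nonneg add_nonneg_nonneg)

lemma unorm_nonneg: "unorm s \<ge> 0"
  by (simp add: unorm_def sum_nonneg)

lemma unorm_le_znorm: "unorm s \<le> znorm s"
  unfolding unorm_def znorm_def z_norm_def lvel_def by (simp add: sum_nonneg)

lemma lvel_le_unorm: "norm (lvel j s) \<le> unorm s"
proof -
  have "(norm (lvel j s))\<^sup>2 \<le> (\<Sum>j\<in>UNIV. (norm (lvel j s))\<^sup>2)"
    by (rule member_le_sum) auto
  then show ?thesis unfolding unorm_def by (metis real_sqrt_abs real_sqrt_le_mono abs_norm_cancel)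
qed

text \<open>The input of follower i together with all leader velocities is controlled by
  sqrt 2 times the full input norm; this is where the constant of the lemma comes from.\<close>
lemma input_le_znorm: "norm (w i s) + unorm s \<le> sqrt 2 * znorm s"
proof -
  let ?p = "norm (w i s)" and ?q = "unorm s"
  have q2: "?q\<^sup>2 = (\<Sum>j\<in>UNIV. (norm (lvel j s))\<^sup>2)" unfolding unorm_def by (simp add: sum_nonneg)
  have p2: "?p\<^sup>2 \<le> (\<Sum>i\<in>UNIV. (norm (w i s))\<^sup>2)" by (rule member_le_sum) auto
  have "(?p + ?q)\<^sup>2 \<le> 2 * (?p\<^sup>2 + ?q\<^sup>2)"
    using zero_le_power2[of "?p - ?q"] by (simp add: power2_eq_square algebra_simps)
  also have "\<dots> \<le> (sqrt 2 * znorm s)\<^sup>2"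
    using p2 q2 by (simp add: znorm_def z_norm_def lvel_def power_mult_distrib sum_nonneg)
  finally show ?thesis
    using unorm_nonneg znorm_nonneg by (meson power2_le_imp_le mult_nonneg_nonneg real_sqrt_ge_zero zero_le_numeral)
qed

definition fdist :: "'f \<Rightarrow> real \<Rightarrow> real" where
  "fdist l t = infdist (x l t) (leader_hull y t)"

definition fdist_max :: "real \<Rightarrow> real" where
  "fdist_max t = dist_hull_max x y t"

lemma leader_hull_eq: "leader_hull y t = convex hull (range (\<lambda>j. y j t))"
  by (simp add: leader_hull_def)

lemma fdist_max_eq: "fdist_max t = Max (range (\<lambda>l. fdist l t))"
  by (simp add: fdist_max_def dist_hull_max_def fdist_def)

lemma fdist_le_max: "fdist l t \<le> fdist_max t"
  unfolding fdist_max_eq by (rule Max_ge) auto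

lemma fdist_nonneg: "fdist l t \<ge> 0"
  by (simp add: fdist_def infdist_nonneg)

definition motion :: "real \<Rightarrow> real \<Rightarrow> real" where
  "motion t s = (\<Sum>l\<in>UNIV. norm (x l s - x l t)) + (\<Sum>j\<in>UNIV. norm (y j s - y j t))"

lemma fdist_change: "\<bar>fdist l s - fdist l t\<bar> \<le> motion t s"
proof -
  have ys: "norm (y j s - y j t) \<le> (\<Sum>j\<in>UNIV. norm (y j s - y j t))" for j
    by (rule member_le_sum) auto
  have xs: "norm (x l s - x l t) \<le> (\<Sum>l\<in>UNIV. norm (x l s - x l t))"
    by (rule member_le_sum) auto
  have h1: "infdist p (leader_hull y s) \<le> infdist p (leader_hull y t) + (\<Sum>j\<in>UNIV. norm (y j s - y j t))" for p
    unfolding leader_hull_eq by (rule infdist_convex_hull_perturb) (use ys in \<open>simp add: norm_minus_commute\<close>)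
  have h2: "infdist p (leader_hull y t) \<le> infdist p (leader_hull y s) + (\<Sum>j\<in>UNIV. norm (y j s - y j t))" for p
    unfolding leader_hull_eq by (rule infdist_convex_hull_perturb) (use ys in simp)
  have i1: "infdist (x l s) (leader_hull y t) \<le> infdist (x l t) (leader_hull y t) + norm (x l s - x l t)"
    using infdist_triangle[of "x l s" _ "x l t"] by (simp add: dist_norm)
  have i2: "infdist (x l t) (leader_hull y s) \<le> infdist (x l s) (leader_hull y s) + norm (x l s - x l t)"
    using infdist_triangle[of "x l t" _ "x l s"] by (simp add: dist_norm norm_minus_commute)
  show ?thesis unfolding fdist_def motion_def
    using h1[of "x l s"] h2[of "x l t"] i1 i2 xs by (simp add: abs_le_iff)
qed

lemma fdist_max_change: "\<bar>fdist_max s - fdist_max t\<bar> \<le> motion t s"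
proof -
  have "fdist l s \<le> fdist_max t + motion t s" "fdist l t \<le> fdist_max s + motion t s" for l
    using fdist_change[of l s t] fdist_le_max[of l t] fdist_le_max[of l s] by (simp_all add: abs_le_iff)
  then have "fdist_max s \<le> fdist_max t + motion t s" "fdist_max t \<le> fdist_max s + motion t s"
    unfolding fdist_max_eq[of s] fdist_max_eq[of t] by (simp_all add: Max_le_iff)
  then show ?thesis by linarith
qed

lemma motion_cont: "t \<in> {0..} \<Longrightarrow> continuous (at t within {0..}) (motion t)"
  unfolding motion_def using x_cont y_cont
  by (intro continuous_intros) (auto simp: continuous_on_eq_continuous_within)

lemma fdist_cont: "continuous_on {0..} (fdist l)"
  unfolding continuous_on_eq_continuous_within
  by (intro ballI continuous_within_by_bound[OF _ motion_cont] fdist_change) (auto simp: motion_def)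

lemma fdist_max_cont: "continuous_on {0..} fdist_max"
  unfolding continuous_on_eq_continuous_within
  by (intro ballI continuous_within_by_bound[OF _ motion_cont] fdist_max_change) (auto simp: motion_def)

text \<open>The rate (n - 1) a^* appearing in the exponent of phi: the largest possible total
  weight of the follower neighbours of a follower.\<close>
definition rate :: real where
  "rate = (real CARD('f) - 1) * a_up"

lemma a_up_nonneg: "a_up \<ge> 0"
  by (rule order_trans[OF a_nonneg a_le])

lemma rate_nonneg: "rate \<ge> 0"
proof -
  have "real CARD('f) \<ge> 1" using card_ge_0_finite[of "UNIV :: 'f set"] by simp
  then show ?thesis using a_up_nonneg by (simp add: rate_def)
qed

lemma sum_a_le_rate: "sum (\<lambda>j. a l j X Y t) (N - {l}) \<le> rate"
proof -
  have "sum (\<lambda>j. a l j X Y t) (N - {l}) \<le> sum (\<lambda>_. a_up) (N - {l})"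
    by (rule sum_mono) (rule a_le)
  also have "\<dots> = real (card (N - {l})) * a_up" by simp
  also have "\<dots> \<le> real (CARD('f) - 1) * a_up"
  proof (rule mult_right_mono)
    have "card (N - {l}) \<le> card (UNIV - {l} :: 'f set)" by (rule card_mono) auto
    then have "card (N - {l}) \<le> CARD('f) - 1" by (simp add: card_Diff_singleton)
    then show "real (card (N - {l})) \<le> real (CARD('f) - 1)" by (rule of_nat_mono)
    show "a_up \<ge> 0" by (rule a_up_nonneg)
  qed
  also have "\<dots> = rate"
    using card_ge_0_finite[of "UNIV :: 'f set"] by (simp add: rate_def of_nat_diff)
  finally show ?thesis .
qed

definition nbrs :: "real \<Rightarrow> 'f \<Rightarrow> 'f set" where
  "nbrs t l = {j. (Inl j, Inl l) \<in> \<sigma> t}"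

definition ldrs :: "real \<Rightarrow> 'f \<Rightarrow> 'l set" where
  "ldrs t l = {j. (Inr j, Inl l) \<in> \<sigma> t}"

definition coupling :: "'f \<Rightarrow> real \<Rightarrow> real" where
  "coupling l t = sum (\<lambda>j. a l j (\<lambda>i. x i t) (\<lambda>i. y i t) t) (nbrs t l - {l})
                  + sum (\<lambda>j. b l j (\<lambda>i. x i t) (\<lambda>i. y i t) t) (ldrs t l)"

lemma coupling_nonneg: "coupling l t \<ge> 0"
  unfolding coupling_def by (intro add_nonneg_nonneg sum_nonneg a_nonneg b_nonneg)

lemma follower_rhs_eq:
  "follower_rhs \<sigma> a b w (\<lambda>i. x i t) (\<lambda>i. y i t) t l =
     (\<Sum>j\<in>nbrs t l. a l j (\<lambda>i. x i t) (\<lambda>i. y i t) t *\<^sub>R (x j t - x l t)) +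
     (\<Sum>j\<in>ldrs t l. b l j (\<lambda>i. x i t) (\<lambda>i. y i t) t *\<^sub>R (y j t - x l t)) + w l t"
  by (simp add: follower_rhs_def nbrs_def ldrs_def)

lemma euler_step_distance:
  assumes h: "0 \<le> h" and small: "h * coupling l t \<le> 1"
  shows "infdist (x l t + h *\<^sub>R (follower_rhs \<sigma> a b w (\<lambda>i. x i t) (\<lambda>i. y i t) t l - w l t))
                 (leader_hull y t)
         \<le> fdist l t + h * rate * (fdist_max t - fdist l t)"
proof -
  define \<alpha> where "\<alpha> j = a l j (\<lambda>i. x i t) (\<lambda>i. y i t) t" for j
  define \<beta> where "\<beta> j = b l j (\<lambda>i. x i t) (\<lambda>i. y i t) t" for j
  have "infdist (x l t + h *\<^sub>R ((\<Sum>j\<in>nbrs t l. \<alpha> j *\<^sub>R (x j t - x l t))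
                                + (\<Sum>j\<in>ldrs t l. \<beta> j *\<^sub>R (y j t - x l t)))) (leader_hull y t)
        \<le> fdist l t + h * sum \<alpha> (nbrs t l - {l}) * (fdist_max t - fdist l t)"
    unfolding fdist_def leader_hull_eq
  proof (rule infdist_hull_consensus_step[where X = "\<lambda>i. x i t", simplified])
    show "h * (sum \<alpha> (nbrs t l - {l}) + sum \<beta> (ldrs t l)) \<le> 1"
      using small by (simp add: coupling_def \<alpha>_def \<beta>_def)
    show "infdist (x j t) (convex hull range (\<lambda>j. y j t)) \<le> fdist_max t" for j
      using fdist_le_max[of j t] by (simp add: fdist_def leader_hull_eq)
  qed (use h a_nonneg b_nonneg in \<open>auto simp: \<alpha>_def \<beta>_def\<close>)
  also have "\<dots> \<le> fdist l t + h * rate * (fdist_max t - fdist l t)"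
    using sum_a_le_rate[of l _ _ t "nbrs t l"] fdist_le_max[of l t] h
    by (intro add_mono order_refl mult_right_mono mult_left_mono) (auto simp: \<alpha>_def)
  finally show ?thesis by (simp add: follower_rhs_eq \<alpha>_def \<beta>_def)
qed

end

text \<open>From here on the input has finite integral over the window {t0..T}; otherwise
  the bound of the main theorem is trivial.\<close>
locale system5_finite_window = system5_window +
  assumes finite_input: "(\<integral>\<^sup>+ s\<in>{t0..T}. ennreal (znorm s) \<partial>lborel) < \<infinity>"
begin

lemma znorm_integrable: "integrable (lebesgue_on {t0..T}) znorm"
proof (rule integrableI_nonneg[OF znorm_measurable])
  have "(\<integral>\<^sup>+ s\<in>{t0..T}. ennreal (znorm s) \<partial>lborel) = (\<integral>\<^sup>+ s. ennreal (znorm s) \<partial>lebesgue_on {t0..T})"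
    by (simp add: nn_integral_restrict_space nn_integral_completion)
  then show "(\<integral>\<^sup>+ s. ennreal (znorm s) \<partial>lebesgue_on {t0..T}) < \<infinity>" using finite_input by simp
qed (simp add: znorm_nonneg)

lemma nn_integral_znorm:
  "(\<integral>\<^sup>+ s\<in>{t0..T}. ennreal (znorm s) \<partial>lborel) = ennreal (integral {t0..T} znorm)"
proof -
  have "(\<integral>\<^sup>+ s\<in>{t0..T}. ennreal (znorm s) \<partial>lborel) = (\<integral>\<^sup>+ s. ennreal (znorm s) \<partial>lebesgue_on {t0..T})"
    by (simp add: nn_integral_restrict_space nn_integral_completion)
  also have "\<dots> = ennreal (integral\<^sup>L (lebesgue_on {t0..T}) znorm)"
    by (rule nn_integral_eq_integral[OF znorm_integrable]) (simp add: znorm_nonneg)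
  also have "integral\<^sup>L (lebesgue_on {t0..T}) znorm = integral {t0..T} znorm"
    by (rule integral_unique[OF has_integral_integral_lebesgue_on[OF znorm_integrable], symmetric])
       simp
  finally show ?thesis .
qed

lemma integrable_subinterval:
  fixes f :: "real \<Rightarrow> real"
  shows "f integrable_on {t0..T} \<Longrightarrow> t0 \<le> p \<Longrightarrow> q \<le> T \<Longrightarrow> f integrable_on {p..q}"
  by (rule integrable_on_subinterval) auto

lemma znorm_integrable_on: "znorm integrable_on {t0..T}"
  using integrable_on_lebesgue_on[OF znorm_integrable] by simp

lemma unorm_integrable_on: "unorm integrable_on {t0..T}"
proof -
  have "integrable (lebesgue_on {t0..T}) unorm"
    by (rule Bochner_Integration.integrable_bound[OF znorm_integrable unorm_measurable])
       (simp add: unorm_nonneg znorm_nonneg unorm_le_znorm)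
  then show ?thesis by (rule integrable_on_lebesgue_on) simp
qed

lemma w_norm_integrable_on: "(\<lambda>s. norm (w i s)) integrable_on {t0..T}"
  by (rule integrable_continuous_real, rule continuous_on_norm, rule continuous_on_subset[OF w_cont])
     (use t0 in auto)

definition Zint :: "real \<Rightarrow> real" where
  "Zint t = sqrt 2 * integral {t0..t} znorm"

lemma Zint_cont: "continuous_on {t0..T} Zint"
  unfolding Zint_def by (intro continuous_intros indefinite_integral_continuous_1 znorm_integrable_on)

lemma Zint_diff:
  assumes "t0 \<le> t" "t \<le> s" "s \<le> T"
  shows "Zint s - Zint t = sqrt 2 * integral {t..s} znorm"
proof -
  have "integral {t0..t} znorm + integral {t..s} znorm = integral {t0..s} znorm"
    using assms integrable_subinterval[OF znorm_integrable_on]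
    by (intro Henstock_Kurzweil_Integration.integral_combine) auto
  then have "integral {t0..s} znorm = integral {t0..t} znorm + integral {t..s} znorm" by simp
  then show ?thesis unfolding Zint_def by (simp add: algebra_simps)
qed

lemma Zint_mono:
  assumes "t0 \<le> t" "t \<le> s" "s \<le> T"
  shows "Zint t \<le> Zint s"
proof -
  have "integral {t..s} znorm \<ge> 0"
    using assms integrable_subinterval[OF znorm_integrable_on]
    by (intro integral_nonneg) (auto simp: znorm_nonneg)
  then have "0 \<le> sqrt 2 * integral {t..s} znorm" by simp
  then show ?thesis using Zint_diff[OF assms] by linarith
qed

lemma Zint_t0: "Zint t0 = 0"
  by (simp add: Zint_def)

lemma leader_drift:
  assumes "t0 \<le> t" "t \<le> s" "s \<le> T"
  shows "fdist l s \<le> infdist (x l s) (leader_hull y t) + integral {t..s} unorm"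
proof -
  have "norm (y j t - y j s) \<le> integral {t..s} unorm" for j
  proof -
    have "(lvel j has_integral (y j s - y j t)) {t..s}"
      by (rule lvel_has_integral) (use assms t0 in auto)
    then have int: "lvel j integrable_on {t..s}" "integral {t..s} (lvel j) = y j s - y j t"
      by (auto simp: integral_unique)
    have "norm (integral {t..s} (lvel j)) \<le> integral {t..s} unorm"
      by (rule integral_norm_bound_integral[OF int(1) integrable_subinterval[OF unorm_integrable_on]])
         (use assms lvel_le_unorm in auto)
    then show ?thesis by (simp add: int(2) norm_minus_commute)
  qed
  then show ?thesis unfolding fdist_def leader_hull_eq by (rule infdist_convex_hull_perturb)
qed

lemma input_drift:
  assumes "t0 \<le> t" "t \<le> s" "s \<le> T" and near: "\<And>r. r \<in> {t..s} \<Longrightarrow> norm (w l r - w l t) \<le> e"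
  shows "(s - t) * norm (w l t) \<le> integral {t..s} (\<lambda>r. norm (w l r)) + e * (s - t)"
proof -
  have "integral {t..s} (\<lambda>r. norm (w l t) - e) \<le> integral {t..s} (\<lambda>r. norm (w l r))"
  proof (rule integral_le)
    show "(\<lambda>r. norm (w l r)) integrable_on {t..s}"
      by (rule integrable_subinterval[OF w_norm_integrable_on]) (use assms in auto)
    show "norm (w l t) - e \<le> norm (w l r)" if "r \<in> {t..s}" for r
      using near[OF that] norm_triangle_ineq2[of "w l t" "w l r"] by (simp add: norm_minus_commute)
  qed (rule integrable_const_ivl)
  then show ?thesis using assms by (simp add: algebra_simps)
qed

lemma input_integrals_le:
  assumes "t0 \<le> t" "t \<le> s" "s \<le> T"
  shows "integral {t..s} (\<lambda>r. norm (w l r)) + integral {t..s} unorm \<le> Zint s - Zint t"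
proof -
  have ints: "(\<lambda>r. norm (w l r)) integrable_on {t..s}" "unorm integrable_on {t..s}"
      "znorm integrable_on {t..s}"
    using assms by (auto intro: integrable_subinterval w_norm_integrable_on unorm_integrable_on
        znorm_integrable_on)
  have "integral {t..s} (\<lambda>r. norm (w l r)) + integral {t..s} unorm
        = integral {t..s} (\<lambda>r. norm (w l r) + unorm r)"
    using ints by (simp add: integral_add)
  also have "\<dots> \<le> integral {t..s} (\<lambda>r. sqrt 2 * znorm r)"
    using ints input_le_znorm by (intro integral_le) (auto intro: integrable_add integrable_cmul)
  also have "\<dots> = Zint s - Zint t" using Zint_diff[OF assms] by simp
  finally show ?thesis .
qed

lemma follower_step_bound:
  assumes t: "t0 \<le> t" "t < s" "s \<le> T"
    and small: "(s - t) * coupling l t \<le> 1"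
    and tangent: "norm (x l s - x l t - (s - t) *\<^sub>R
                   follower_rhs \<sigma> a b w (\<lambda>i. x i t) (\<lambda>i. y i t) t l) \<le> e * (s - t)"
    and near: "\<And>r. r \<in> {t..s} \<Longrightarrow> norm (w l r - w l t) \<le> e"
  shows "fdist l s \<le> fdist l t + (s - t) * rate * (fdist_max t - fdist l t) + (Zint s - Zint t)
                      + 2 * e * (s - t)"
proof -
  define h where "h = s - t"
  define E where "E = x l t + h *\<^sub>R (follower_rhs \<sigma> a b w (\<lambda>i. x i t) (\<lambda>i. y i t) t l - w l t)"
  have h: "h > 0" using t by (simp add: h_def)
  have consensus: "infdist E (leader_hull y t) \<le> fdist l t + h * rate * (fdist_max t - fdist l t)"
    unfolding E_def using h small by (intro euler_step_distance) (auto simp: h_def)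
  have "x l s - E = (x l s - x l t - h *\<^sub>R follower_rhs \<sigma> a b w (\<lambda>i. x i t) (\<lambda>i. y i t) t l)
                    + h *\<^sub>R w l t"
    unfolding E_def by (simp add: algebra_simps)
  then have "dist (x l s) E \<le> norm (x l s - x l t - h *\<^sub>R follower_rhs \<sigma> a b w (\<lambda>i. x i t) (\<lambda>i. y i t) t l)
                              + norm (h *\<^sub>R w l t)"
    unfolding dist_norm by (metis norm_triangle_ineq)
  also have "\<dots> \<le> e * h + h * norm (w l t)" using tangent h by (simp add: h_def)
  finally have "dist (x l s) E \<le> e * h + h * norm (w l t)" .
  then have follow: "infdist (x l s) (leader_hull y t) \<le> infdist E (leader_hull y t) + h * norm (w l t) + e * h"
    using infdist_triangle[of "x l s" "leader_hull y t" E] by linarith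
  have "fdist l s \<le> infdist (x l s) (leader_hull y t) + integral {t..s} unorm"
    using leader_drift t by simp
  moreover have "h * norm (w l t) \<le> integral {t..s} (\<lambda>r. norm (w l r)) + e * h"
    using input_drift[of t s l e] t near by (simp add: h_def)
  moreover have "integral {t..s} (\<lambda>r. norm (w l r)) + integral {t..s} unorm \<le> Zint s - Zint t"
    using input_integrals_le t by simp
  ultimately show ?thesis using consensus follow by (simp add: h_def algebra_simps)
qed

lemma local_estimate:
  assumes t: "t \<in> {t0..<T} - exc" and e: "e > 0"
  shows "eventually (\<lambda>s. \<forall>l. fdist l s \<le> fdist l t + (s - t) * rate * (fdist_max t - fdist l t)
                                + (Zint s - Zint t) + e * (s - t)) (at_right t)"
proof (rule eventually_all_finite)
  fix l
  have t': "t0 \<le> t" "t < T" "t \<in> {0..} - exc" using t t0 by auto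
  have "eventually (\<lambda>s. norm (x l s - x l t - (s - t) *\<^sub>R
          follower_rhs \<sigma> a b w (\<lambda>i. x i t) (\<lambda>i. y i t) t l) \<le> e / 2 * (s - t)) (at_right t)"
    by (rule vector_derivative_at_right_estimate[OF follower_derivative[OF t'(3)]]) (use t' e in auto)
  moreover have "eventually (\<lambda>s. \<forall>r\<in>{t..s}. dist (w l r) (w l t) \<le> e / 2) (at_right t)"
    by (rule continuous_at_right_estimate)
       (use w_cont t' e in \<open>auto simp: continuous_on_eq_continuous_within\<close>)
  moreover have "eventually (\<lambda>s. (s - t) * coupling l t \<le> 1) (at_right t)"
    by (rule eventually_at_right_step_small[OF coupling_nonneg])
  moreover have "eventually (\<lambda>s. t < s \<and> s \<le> T) (at_right t)"
    using t' by (auto simp: eventually_at_right_field intro!: exI[of _ T])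
  ultimately show "eventually (\<lambda>s. fdist l s \<le> fdist l t + (s - t) * rate * (fdist_max t - fdist l t)
                                + (Zint s - Zint t) + e * (s - t)) (at_right t)"
  proof eventually_elim
    case (elim s)
    then show ?case using follower_step_bound[of t s l "e / 2"] t' by (auto simp: dist_norm)
  qed
qed

lemma fdist_max_growth:
  assumes t: "t0 \<le> t" "t \<le> T"
  shows "fdist_max t \<le> fdist_max t0 + Zint t"
proof -
  have "fdist_max t - Zint t \<le> fdist_max t0 - Zint t0"
  proof (rule dini_nonincreasing[OF t(1) _ exc_countable])
    show "continuous_on {t0..t} (\<lambda>s. fdist_max s - Zint s)"
      using t t0 by (intro continuous_intros continuous_on_subset[OF fdist_max_cont]
          continuous_on_subset[OF Zint_cont]) auto
    fix \<tau> e :: real assume \<tau>: "\<tau> \<in> {t0..<t} - exc" and e: "e > 0"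
    have "\<tau> \<in> {t0..<T} - exc" using \<tau> t by auto
    note local = local_estimate[OF this e]
    have small: "eventually (\<lambda>s. (s - \<tau>) * rate \<le> 1) (at_right \<tau>)"
      by (rule eventually_at_right_step_small[OF rate_nonneg])
    show "eventually (\<lambda>s. fdist_max s - Zint s \<le> fdist_max \<tau> - Zint \<tau> + e * (s - \<tau>)) (at_right \<tau>)"
      using local small
    proof eventually_elim
      case (elim s)
      have "fdist l s \<le> fdist_max \<tau> + (Zint s - Zint \<tau>) + e * (s - \<tau>)" for l
      proof -
        have "(fdist_max \<tau> - fdist l \<tau>) * ((s - \<tau>) * rate) \<le> fdist_max \<tau> - fdist l \<tau>"
          using mult_left_le[OF elim(2)] fdist_le_max[of l \<tau>] by simp
        moreover have "fdist l s \<le> fdist l \<tau> + (s - \<tau>) * rate * (fdist_max \<tau> - fdist l \<tau>)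
                                  + (Zint s - Zint \<tau>) + e * (s - \<tau>)"
          using elim(1) by blast
        ultimately show ?thesis by (simp add: mult.commute)
      qed
      then have "fdist_max s \<le> fdist_max \<tau> + (Zint s - Zint \<tau>) + e * (s - \<tau>)"
        unfolding fdist_max_eq[of s] by (simp add: Max_le_iff)
      then show ?case by simp
    qed
  qed
  then show ?thesis using Zint_t0 by simp
qed

text \<open>Comparison with the linear equation d' = rate * (M - d): after subtracting the
  accumulated input, the excess of follower i's distance over the level M decays
  like exp (- rate * (t - t1)).\<close>
lemma fdist_decay:
  assumes t1: "t0 \<le> t1" and t: "t1 \<le> t" "t \<le> T"
  shows "(fdist i t - (Zint t - Zint t1) - (fdist_max t0 + Zint T)) * exp (rate * (t - t1))
         \<le> fdist i t1 - (fdist_max t0 + Zint T)"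
proof -
  define F where "F s = fdist i s - (Zint s - Zint t1) - (fdist_max t0 + Zint T)" for s
  have "F t * exp (rate * (t - t1)) \<le> F t1"
  proof (rule dini_exp_decay[OF t(1) _ exc_countable rate_nonneg])
    show "continuous_on {t1..t} F"
      unfolding F_def using t t1 t0
      by (intro continuous_intros continuous_on_subset[OF fdist_cont]
          continuous_on_subset[OF Zint_cont]) auto
    fix \<tau> e :: real assume \<tau>: "\<tau> \<in> {t1..<t} - exc" and e: "e > 0"
    have "\<tau> \<in> {t0..<T} - exc" using \<tau> t1 t by auto
    note local = local_estimate[OF this e]
    have "fdist_max \<tau> \<le> fdist_max t0 + Zint \<tau>" using fdist_max_growth \<tau> t1 t by simp
    moreover have "Zint t1 \<le> Zint T" using Zint_mono t1 t by simp
    ultimately have gap: "fdist_max \<tau> - fdist i \<tau> \<le> - F \<tau>" by (simp add: F_def)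
    show "eventually (\<lambda>s. F s \<le> (1 - rate * (s - \<tau>)) * F \<tau> + e * (s - \<tau>)) (at_right \<tau>)"
      using local eventually_at_right_less[of \<tau>]
    proof eventually_elim
      case (elim s)
      have "(s - \<tau>) * rate * (fdist_max \<tau> - fdist i \<tau>) \<le> (s - \<tau>) * rate * (- F \<tau>)"
        using gap elim(2) rate_nonneg by (intro mult_left_mono) auto
      moreover have "(1 - rate * (s - \<tau>)) * F \<tau> = F \<tau> + (s - \<tau>) * rate * (- F \<tau>)"
        by (simp add: algebra_simps)
      moreover have "F s - F \<tau> = fdist i s - fdist i \<tau> - (Zint s - Zint \<tau>)"
        by (simp add: F_def)
      moreover have "fdist i s \<le> fdist i \<tau> + (s - \<tau>) * rate * (fdist_max \<tau> - fdist i \<tau>)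
                                + (Zint s - Zint \<tau>) + e * (s - \<tau>)"
        using elim(1) by blast
      ultimately show ?case by linarith
    qed
  qed
  then show ?thesis by (simp add: F_def)
qed

lemma fdist_bound:
  assumes t1: "t0 \<le> t1" and t: "t1 \<le> t" "t \<le> T" and c0: "c0 \<ge> 0"
    and start: "fdist i t1 \<le> eps0 * fdist_max t0 + c0"
  shows "fdist i t \<le> (1 - exp (- (rate * (t - t1))) * (1 - eps0)) * fdist_max t0 + c0 + 2 * Zint T"
proof -
  define M where "M = fdist_max t0 + Zint T"
  define E where "E = exp (- (rate * (t - t1)))"
  have E: "E > 0" "E \<le> 1" using rate_nonneg t by (simp_all add: E_def)
  have "exp (rate * (t - t1)) * E = 1" by (simp add: E_def exp_minus[symmetric] exp_add[symmetric])
  then have "fdist i t - (Zint t - Zint t1) - M \<le> (fdist i t1 - M) * E"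
    using mult_right_mono[OF fdist_decay[OF t1 t, of i] less_imp_le[OF E(1)]]
    by (simp add: M_def mult.assoc)
  then have decay: "fdist i t \<le> M * (1 - E) + fdist i t1 * E + Zint t - Zint t1"
    by (simp add: algebra_simps)
  have Zint: "Zint t \<le> Zint T" "0 \<le> Zint t1" "0 \<le> Zint T"
    using Zint_mono[of t T] Zint_mono[of t0 t1] Zint_mono[of t0 T] Zint_t0 t1 t by auto
  have "fdist i t1 * E \<le> (eps0 * fdist_max t0 + c0) * E" using start E by (intro mult_right_mono) auto
  moreover have "c0 * E \<le> c0" "Zint T * (1 - E) \<le> Zint T" using c0 E Zint by (simp_all add: mult_left_le)
  moreover have "M * (1 - E) + (eps0 * fdist_max t0 + c0) * E
                 = (1 - E * (1 - eps0)) * fdist_max t0 + Zint T * (1 - E) + c0 * E"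
    by (simp add: M_def algebra_simps)
  ultimately show ?thesis using decay Zint unfolding E_def by linarith
qed

end

lemma ennreal_le_add_mult:
  fixes A B c R :: real
  assumes "A \<le> B + c * R" "0 \<le> B" "0 \<le> c" "0 \<le> R"
  shows "ennreal A \<le> ennreal B + ennreal c * ennreal R"
proof -
  have "ennreal A \<le> ennreal (B + c * R)" using assms(1) by (rule ennreal_leI)
  also have "\<dots> = ennreal B + ennreal c * ennreal R"
    using assms(2-4) by (simp add: ennreal_plus ennreal_mult)
  finally show ?thesis .
qed

text \<open>Apply the estimates on the window [t0, t1 + T^]; if the input integral is infinite the
  right-hand side is infinite and there is nothing to prove.\<close>
theorem lemma11:
  fixes P :: "('f::finite, 'l::finite) digraph set"
    and \<sigma> :: "real \<Rightarrow> ('f, 'l) digraph"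
    and a :: "'f \<Rightarrow> 'f \<Rightarrow> ('f \<Rightarrow> 'a::euclidean_space) \<Rightarrow> ('l \<Rightarrow> 'a) \<Rightarrow> real \<Rightarrow> real"
    and b :: "'f \<Rightarrow> 'l \<Rightarrow> ('f \<Rightarrow> 'a) \<Rightarrow> ('l \<Rightarrow> 'a) \<Rightarrow> real \<Rightarrow> real"
    and u :: "'l \<Rightarrow> ('l \<Rightarrow> 'a) \<Rightarrow> real \<Rightarrow> 'a"
    and w x :: "'f \<Rightarrow> real \<Rightarrow> 'a"
    and y :: "'l \<Rightarrow> real \<Rightarrow> 'a"
    and tauD a_lo a_up b_lo That eps0 t0 c0 t1 :: real
    and i :: 'f
  assumes n2: "CARD('f) \<ge> 2"
    and data: "system5_data P tauD \<sigma> a b u w a_lo a_up b_lo"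
    and traj: "system5_traj \<sigma> a b u w x y"
    and That: "That > 0"
    and eps0: "0 < eps0" "eps0 < 1"
    and t0: "t0 \<ge> 0"
    and c0: "c0 > 0"
    and t1: "t1 \<ge> t0"
    and start: "infdist (x i t1) (leader_hull y t1) \<le> eps0 * dist_hull_max x y t0 + c0"
  shows "\<forall>t\<in>{t1..t1 + That}.
           ennreal (infdist (x i t) (leader_hull y t))
             \<le> ennreal (phi_eps CARD('f) a_up eps0 (t - t1) * dist_hull_max x y t0 + c0)
                + ennreal (2 * sqrt 2) *
                  (\<integral>\<^sup>+ s\<in>{t0..t1 + That}. ennreal (z_norm u w y s) \<partial>lborel)"
proof
  fix t assume t: "t \<in> {t1..t1 + That}"
  interpret W: system5_window P \<sigma> a b u w x y tauD a_lo a_up b_lo t0 "t1 + That"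
    using data traj t0 t1 That by unfold_locales auto
  let ?bound = "phi_eps CARD('f) a_up eps0 (t - t1) * dist_hull_max x y t0 + c0"
  have phi: "phi_eps CARD('f) a_up eps0 (t - t1) = 1 - exp (- (W.rate * (t - t1))) * (1 - eps0)"
    by (simp add: phi_eps_def W.rate_def algebra_simps)
  have "exp (- (W.rate * (t - t1))) * (1 - eps0) \<le> 1 * 1"
    using W.rate_nonneg t eps0 by (intro mult_mono) auto
  then have "0 \<le> ?bound"
    using W.fdist_le_max[of i t0] W.fdist_nonneg[of i t0] c0 phi by (simp add: W.fdist_max_def)
  show "ennreal (infdist (x i t) (leader_hull y t))
        \<le> ennreal ?bound + ennreal (2 * sqrt 2) * (\<integral>\<^sup>+ s\<in>{t0..t1 + That}. ennreal (z_norm u w y s) \<partial>lborel)"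
  proof (cases "(\<integral>\<^sup>+ s\<in>{t0..t1 + That}. ennreal (z_norm u w y s) \<partial>lborel) < \<infinity>")
    case False
    then show ?thesis by (simp add: less_top[symmetric] ennreal_mult_top)
  next
    case True
    interpret F: system5_finite_window P \<sigma> a b u w x y tauD a_lo a_up b_lo t0 "t1 + That"
      by unfold_locales (use True in \<open>simp add: W.znorm_def\<close>)
    let ?R = "integral {t0..t1 + That} W.znorm"
    have "W.fdist i t \<le> ?bound + 2 * F.Zint (t1 + That)"
      using F.fdist_bound[of t1 t c0 i eps0] t t1 c0 start phi
      by (simp add: W.fdist_def W.fdist_max_def)
    then have "ennreal (infdist (x i t) (leader_hull y t)) \<le> ennreal ?bound + ennreal (2 * sqrt 2) * ennreal ?R"
      using \<open>0 \<le> ?bound\<close> integral_nonneg[OF F.znorm_integrable_on W.znorm_nonneg]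
      by (intro ennreal_le_add_mult) (auto simp: F.Zint_def W.fdist_def)
    then show ?thesis using F.nn_integral_znorm by (simp add: W.znorm_def)
  qed
qed

end
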